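(* Let $U$ be a discrete group with torsion and $e\in\mathbb{C}[U]$ a nontrivial projection; let $T=et+t^{-1}e\in\mathbb{C}[U\wr\mathbb{Z}]$. For $n\ge 2$ and $1\le m\le n-1$ define $r_{m,n}=\sum_{i=1}^{n-1}\beta^{(n)}_{m,i}t^iq_n$ and $p_{m,n}=r_{m,n}r_{m,n}^*$. Then $(p_{m,n}\mid n\ge 2,\ 1\le m\le n-1)$ is a family of pairwise orthogonal projections in $\mathbb{C}[U\wr\mathbb{Z}]$ which is complete, that is, $\sum_{n\ge 2}\sum_{m=1}^{n-1}\mathrm{tr}_{U\wr\mathbb{Z}}(p_{m,n})=1$. Moreover, for $1\le m\le n-1$, $T\,p_{m,n}=\lambda_{m,n}p_{m,n}$.
   Context: $U\wr\mathbb{Z}=(\bigoplus_{i\in\mathbb{Z}}U)\rtimes C_\infty$, where $C_\infty$ is infinite cyclic with generator $t$ acting by the shift $t^{-1}((g_n)_{n})t=(g_{n-1})_n$; $U$ is identified with the subgroup of elements $(\dots,1,u,1,\dots)$ with $u$ in position $0$. A nontrivial projection means $e=e^*=e^2$, $e\ne0,1$. $\mathrm{tr}_{U\wr\mathbb{Z}}(a)$ is the coefficient of $1$ in $a\in\mathbb{C}[U\wr\mathbb{Z}]$. Put $e_i=t^{-i}et^i$, $f_i=1-e_i$, and $q_n=f_1e_2\cdots e_{n-1}f_n$ for $n\ge2$. $\lambda_{m,n}=2\cos(\frac mn\pi)$. For $n\ge 2$, $A_n$ is the $(n-1)\times(n-1)$ matrix with entries $\alpha_{i,j}=1$ if $|i-j|=1$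 and $0$ otherwise, and $B_n=(\beta^{(n)}_{i,j})_{1\le i,j\le n-1}$ is a real orthogonal matrix such that $B_nA_nB_n^*$ is the diagonal matrix with diagonal entries $\lambda_{1,n},\dots,\lambda_{n-1,n}$ in this order (these are the eigenvalues of $A_n$). *)

theory Defs
  imports Complex_Main "HOL-Algebra.Group"
begin

text \<open>An element of the complex group ring C[G] is a finitely supported function
  carrier G -> complex (extended by 0 outside the carrier).\<close>

definition gr_elem :: "('g,'z) monoid_scheme \<Rightarrow> ('g \<Rightarrow> complex) \<Rightarrow> bool" where
  "gr_elem G a \<longleftrightarrow> finite {x. a x \<noteq> 0} \<and> {x. a x \<noteq> 0} \<subseteq> carrier G"

definition gr_of :: "('g,'z) monoid_scheme \<Rightarrow> 'g \<Rightarrow> ('g \<Rightarrow> complex)" where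
  "gr_of G g = (\<lambda>x. if x = g then 1 else 0)"

definition gr_one :: "('g,'z) monoid_scheme \<Rightarrow> ('g \<Rightarrow> complex)" where
  "gr_one G = gr_of G \<one>\<^bsub>G\<^esub>"

definition gr_zero :: "'g \<Rightarrow> complex" where
  "gr_zero = (\<lambda>_. 0)"

definition gr_add :: "('g \<Rightarrow> complex) \<Rightarrow> ('g \<Rightarrow> complex) \<Rightarrow> ('g \<Rightarrow> complex)" where
  "gr_add a b = (\<lambda>x. a x + b x)"

definition gr_diff :: "('g \<Rightarrow> complex) \<Rightarrow> ('g \<Rightarrow> complex) \<Rightarrow> ('g \<Rightarrow> complex)" where
  "gr_diff a b = (\<lambda>x. a x - b x)"

definition gr_scale :: "complex \<Rightarrow> ('g \<Rightarrow> complex) \<Rightarrow> ('g \<Rightarrow> complex)" where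
  "gr_scale c a = (\<lambda>x. c * a x)"

definition gr_mult :: "('g,'z) monoid_scheme \<Rightarrow> ('g \<Rightarrow> complex) \<Rightarrow> ('g \<Rightarrow> complex) \<Rightarrow> ('g \<Rightarrow> complex)" where
  "gr_mult G a b = (\<lambda>x. if x \<in> carrier G
      then (\<Sum>y\<in>{y\<in>carrier G. a y \<noteq> 0}. a y * b (inv\<^bsub>G\<^esub> y \<otimes>\<^bsub>G\<^esub> x)) else 0)"

definition gr_star :: "('g,'z) monoid_scheme \<Rightarrow> ('g \<Rightarrow> complex) \<Rightarrow> ('g \<Rightarrow> complex)" where
  "gr_star G a = (\<lambda>x. if x \<in> carrier G then cnj (a (inv\<^bsub>G\<^esub> x)) else 0)"

definition gr_prod :: "('g,'z) monoid_scheme \<Rightarrow> ('g \<Rightarrow> complex) list \<Rightarrow> ('g \<Rightarrow> complex)" where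
  "gr_prod G xs = foldr (gr_mult G) xs (gr_one G)"

definition gr_tr :: "('g,'z) monoid_scheme \<Rightarrow> ('g \<Rightarrow> complex) \<Rightarrow> complex" where
  "gr_tr G a = a \<one>\<^bsub>G\<^esub>"

definition gr_map :: "('g,'z) monoid_scheme \<Rightarrow> ('h,'w) monoid_scheme \<Rightarrow> ('g \<Rightarrow> 'h)
    \<Rightarrow> ('g \<Rightarrow> complex) \<Rightarrow> ('h \<Rightarrow> complex)" where
  "gr_map G H \<phi> a = (\<lambda>y. if y \<in> carrier H
      then (\<Sum>x\<in>{x\<in>carrier G. a x \<noteq> 0 \<and> \<phi> x = y}. a x) else 0)"

definition gr_projection :: "('g,'z) monoid_scheme \<Rightarrow> ('g \<Rightarrow> complex) \<Rightarrow> bool" where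
  "gr_projection G p \<longleftrightarrow> gr_elem G p \<and> gr_star G p = p \<and> gr_mult G p p = p"

text \<open>An element (f, k) stands for (f_n)_n * t^k, where f is finitely supported.
  Since t^{-1} (g_n)_n t = (g_{n-1})_n, we have t^k (g_n)_n t^{-k} = (g_{n+k})_n, whence
  (f,k)(g,l) = ((f_n g_{n+k})_n, k+l).\<close>
definition wreath :: "('u,'z) monoid_scheme \<Rightarrow> ((int \<Rightarrow> 'u) \<times> int) monoid" where
  "wreath U = \<lparr>carrier = {(f, k). (\<forall>n. f n \<in> carrier U) \<and> finite {n. f n \<noteq> \<one>\<^bsub>U\<^esub>}},
     monoid.mult = (\<lambda>(f, k) (g, l). (\<lambda>n. f n \<otimes>\<^bsub>U\<^esub> g (n + k), k + l)),
     one = (\<lambda>_. \<one>\<^bsub>U\<^esub>, 0)\<rparr>"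

definition wr_t :: "('u,'z) monoid_scheme \<Rightarrow> (int \<Rightarrow> 'u) \<times> int" where
  "wr_t U = (\<lambda>_. \<one>\<^bsub>U\<^esub>, 1)"

definition wr_emb :: "('u,'z) monoid_scheme \<Rightarrow> 'u \<Rightarrow> (int \<Rightarrow> 'u) \<times> int" where
  "wr_emb U u = ((\<lambda>n. if n = 0 then u else \<one>\<^bsub>U\<^esub>), 0)"

definition wr_tpow :: "('u,'z) monoid_scheme \<Rightarrow> int \<Rightarrow> ((int \<Rightarrow> 'u) \<times> int \<Rightarrow> complex)" where
  "wr_tpow U i = gr_of (wreath U) (wr_t U [^]\<^bsub>wreath U\<^esub> i)"

definition wr_e :: "('u,'z) monoid_scheme \<Rightarrow> ('u \<Rightarrow> complex) \<Rightarrow> int \<Rightarrow> ((int \<Rightarrow> 'u) \<times> int \<Rightarrow> complex)" where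
  "wr_e U e i = gr_mult (wreath U) (gr_mult (wreath U) (wr_tpow U (- i))
       (gr_map U (wreath U) (wr_emb U) e)) (wr_tpow U i)"

definition wr_f :: "('u,'z) monoid_scheme \<Rightarrow> ('u \<Rightarrow> complex) \<Rightarrow> int \<Rightarrow> ((int \<Rightarrow> 'u) \<times> int \<Rightarrow> complex)" where
  "wr_f U e i = gr_diff (gr_one (wreath U)) (wr_e U e i)"

definition wr_q :: "('u,'z) monoid_scheme \<Rightarrow> ('u \<Rightarrow> complex) \<Rightarrow> nat \<Rightarrow> ((int \<Rightarrow> 'u) \<times> int \<Rightarrow> complex)" where
  "wr_q U e n = gr_prod (wreath U)
     ([wr_f U e 1] @ map (\<lambda>i. wr_e U e (int i)) [2..<n] @ [wr_f U e (int n)])"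

definition wr_T :: "('u,'z) monoid_scheme \<Rightarrow> ('u \<Rightarrow> complex) \<Rightarrow> ((int \<Rightarrow> 'u) \<times> int \<Rightarrow> complex)" where
  "wr_T U e = gr_add (gr_mult (wreath U) (gr_map U (wreath U) (wr_emb U) e) (wr_tpow U 1))
                     (gr_mult (wreath U) (wr_tpow U (-1)) (gr_map U (wreath U) (wr_emb U) e))"

definition lam :: "nat \<Rightarrow> nat \<Rightarrow> real" where
  "lam m n = 2 * cos (real m / real n * pi)"

definition alphaA :: "nat \<Rightarrow> nat \<Rightarrow> real" where
  "alphaA i j = (if i = j + 1 \<or> j = i + 1 then 1 else 0)"

text \<open>B n i j = beta^{(n)}_{i,j}, 1 <= i,j <= n-1: B_n real orthogonal with
  B_n A_n B_n^* = diag(lambda_{1,n}, ..., lambda_{n-1,n}).\<close>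
definition diagonalizes :: "(nat \<Rightarrow> nat \<Rightarrow> nat \<Rightarrow> real) \<Rightarrow> bool" where
  "diagonalizes B \<longleftrightarrow> (\<forall>n\<ge>2. \<forall>i\<in>{1..n-1}. \<forall>j\<in>{1..n-1}.
      (\<Sum>k\<in>{1..n-1}. B n i k * B n j k) = (if i = j then 1 else 0) \<and>
      (\<Sum>k\<in>{1..n-1}. \<Sum>l\<in>{1..n-1}. B n i k * alphaA k l * B n j l)
         = (if i = j then lam i n else 0))"

definition wr_r :: "('u,'z) monoid_scheme \<Rightarrow> ('u \<Rightarrow> complex) \<Rightarrow> (nat \<Rightarrow> nat \<Rightarrow> nat \<Rightarrow> real)
    \<Rightarrow> nat \<Rightarrow> nat \<Rightarrow> ((int \<Rightarrow> 'u) \<times> int \<Rightarrow> complex)" where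
  "wr_r U e B m n = (\<lambda>x. \<Sum>i\<in>{1..n-1}.
      complex_of_real (B n m i) * gr_mult (wreath U) (wr_tpow U (int i)) (wr_q U e n) x)"

definition wr_p :: "('u,'z) monoid_scheme \<Rightarrow> ('u \<Rightarrow> complex) \<Rightarrow> (nat \<Rightarrow> nat \<Rightarrow> nat \<Rightarrow> real)
    \<Rightarrow> nat \<Rightarrow> nat \<Rightarrow> ((int \<Rightarrow> 'u) \<times> int \<Rightarrow> complex)" where
  "wr_p U e B m n = gr_mult (wreath U) (wr_r U e B m n) (gr_star (wreath U) (wr_r U e B m n))"

end

(* Copies of C[U] sitting at distinct positions of the base group commute, so their products
   behave like elementary tensors: they multiply, adjoin and trace factorwise, and conjugation by
   t^k shifts all positions by k.  Hence q_n = f_1 e_2 ... e_(n-1) f_n is a projection of trace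
   (1 - tau)^2 tau^(n-2), where tau = tr e, and q_n t^k q_n' = 0 unless k = 0 and n = n', because
   otherwise some position carries e f or f e.  So (t^i q_n)^* (t^j q_n') = delta q_n.  Since e_j q_n
   is q_n or 0 according as 1 < j < n or not, T sends t^i q_n to t^(i+1) q_n + t^(i-1) q_n, dropping
   the terms whose index leaves 1..n-1: T acts on the t^i q_n by the path matrix A_n.  Rotating
   by the orthogonal B_n gives r_(m,n) with r^* r' = delta q_n and T r_(m,n) = lambda_(m,n) r_(m,n),
   so the p_(m,n) = r r^* are pairwise orthogonal projections with eigenvalue lambda_(m,n) and
   tr p_(m,n) = tr q_n.  Completeness is sum_(n>=2) (n-1) (1-tau)^2 tau^(n-2) = 1, which holds
   because |tau| < 1 for a projection e other than 1. *)

theory Submission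
  imports Defs "HOL-Library.FuncSet" "Jordan_Normal_Form.Determinant"
begin

section \<open>Complex group rings\<close>

context group
begin

lemma gr_elemD:
  "gr_elem G a \<Longrightarrow> finite {x. a x \<noteq> 0}"
  "gr_elem G a \<Longrightarrow> {x. a x \<noteq> 0} \<subseteq> carrier G"
  "gr_elem G a \<Longrightarrow> x \<notin> carrier G \<Longrightarrow> a x = 0"
  unfolding gr_elem_def by auto

lemma inv_mult_cancel_left [simp]:
  "x \<in> carrier G \<Longrightarrow> y \<in> carrier G \<Longrightarrow> x \<otimes> (inv x \<otimes> y) = y"
  "x \<in> carrier G \<Longrightarrow> y \<in> carrier G \<Longrightarrow> inv x \<otimes> (x \<otimes> y) = y"
  by (simp_all add: m_assoc[symmetric])

lemma inj_on_mult_left: "z \<in> carrier G \<Longrightarrow> S \<subseteq> carrier G \<Longrightarrow> inj_on (\<lambda>w. z \<otimes> w) S"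
  by (rule inj_onI) (metis Units_eq Units_l_cancel subsetD)

lemma gr_mult_eq_sum:
  assumes "finite A" "A \<subseteq> carrier G" "{y\<in>carrier G. a y \<noteq> 0} \<subseteq> A"
  shows "gr_mult G a b x = (if x \<in> carrier G then (\<Sum>y\<in>A. a y * b (inv y \<otimes> x)) else 0)"
proof -
  have "(\<Sum>y\<in>{y\<in>carrier G. a y \<noteq> 0}. a y * b (inv y \<otimes> x)) = (\<Sum>y\<in>A. a y * b (inv y \<otimes> x))"
    by (rule sum.mono_neutral_left) (use assms in auto)
  thus ?thesis unfolding gr_mult_def by simp
qed

lemma gr_mult_eq_sum_vanishing:
  assumes "finite {y\<in>carrier G. a y \<noteq> 0}" "finite A" "A \<subseteq> carrier G" "x \<in> carrier G"
    and "\<And>y. y \<in> carrier G \<Longrightarrow> y \<notin> A \<Longrightarrow> a y * b (inv y \<otimes> x) = 0"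
  shows "gr_mult G a b x = (\<Sum>y\<in>A. a y * b (inv y \<otimes> x))"
proof -
  let ?S = "{y\<in>carrier G. a y \<noteq> 0}"
  have "(\<Sum>y\<in>?S. a y * b (inv y \<otimes> x)) = (\<Sum>y\<in>?S \<union> A. a y * b (inv y \<otimes> x))"
    by (rule sum.mono_neutral_left) (use assms in auto)
  also have "\<dots> = (\<Sum>y\<in>A. a y * b (inv y \<otimes> x))"
    by (rule sum.mono_neutral_right) (use assms in auto)
  finally show ?thesis unfolding gr_mult_def using assms(4) by simp
qed

lemma gr_mult_eq_supp_sum:
  assumes "gr_elem G a"
  shows "gr_mult G a b x = (if x \<in> carrier G then (\<Sum>y\<in>{y. a y \<noteq> 0}. a y * b (inv y \<otimes> x)) else 0)"
  by (rule gr_mult_eq_sum) (use gr_elemD[OF assms] in auto)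

lemma gr_supp_mult_subset:
  assumes a: "gr_elem G a"
  shows "{x. gr_mult G a b x \<noteq> 0} \<subseteq> (\<lambda>(y, w). y \<otimes> w) ` ({y. a y \<noteq> 0} \<times> {w. b w \<noteq> 0})"
proof
  fix x assume "x \<in> {x. gr_mult G a b x \<noteq> 0}"
  hence x: "x \<in> carrier G" and s: "(\<Sum>y\<in>{y. a y \<noteq> 0}. a y * b (inv y \<otimes> x)) \<noteq> 0"
    by (auto simp: gr_mult_eq_supp_sum[OF a] split: if_splits)
  from sum.not_neutral_contains_not_neutral[OF s]
  obtain y where y: "a y \<noteq> 0" "b (inv y \<otimes> x) \<noteq> 0" by auto
  have "y \<in> carrier G" using y gr_elemD(2)[OF a] by auto
  hence "x = y \<otimes> (inv y \<otimes> x)" using x by (simp add: m_assoc[symmetric])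
  thus "x \<in> (\<lambda>(y, w). y \<otimes> w) ` ({y. a y \<noteq> 0} \<times> {w. b w \<noteq> 0})" using y by force
qed

lemma gr_elem_mult:
  assumes a: "gr_elem G a" and b: "gr_elem G b"
  shows "gr_elem G (gr_mult G a b)"
proof -
  have "finite ((\<lambda>(y, w). y \<otimes> w) ` ({y. a y \<noteq> 0} \<times> {w. b w \<noteq> 0}))"
    using gr_elemD(1)[OF a] gr_elemD(1)[OF b] by auto
  hence "finite {x. gr_mult G a b x \<noteq> 0}" by (rule finite_subset[OF gr_supp_mult_subset[OF a]])
  moreover have "{x. gr_mult G a b x \<noteq> 0} \<subseteq> carrier G"
    by (auto simp: gr_mult_def split: if_splits)
  ultimately show ?thesis unfolding gr_elem_def ..
qed

lemma gr_mult_eq_sum_translate: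
  assumes b: "gr_elem G b" and z: "z \<in> carrier G" and x: "x \<in> carrier G"
    and P: "finite P" "P \<subseteq> carrier G" "(\<lambda>w. z \<otimes> w) ` {w. b w \<noteq> 0} \<subseteq> P"
  shows "(\<Sum>y\<in>P. b (inv z \<otimes> y) * c (inv y \<otimes> x)) = gr_mult G b c (inv z \<otimes> x)"
proof -
  let ?Sb = "{w. b w \<noteq> 0}"
  have Sb: "finite ?Sb" "?Sb \<subseteq> carrier G" using gr_elemD[OF b] by auto
  have "(\<Sum>y\<in>P. b (inv z \<otimes> y) * c (inv y \<otimes> x))
      = (\<Sum>y\<in>(\<lambda>w. z \<otimes> w) ` ?Sb. b (inv z \<otimes> y) * c (inv y \<otimes> x))"
  proof (rule sum.mono_neutral_right[OF P(1) P(3)])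
    show "\<forall>y\<in>P - (\<lambda>w. z \<otimes> w) ` ?Sb. b (inv z \<otimes> y) * c (inv y \<otimes> x) = 0"
    proof
      fix y assume y: "y \<in> P - (\<lambda>w. z \<otimes> w) ` ?Sb"
      hence "y = z \<otimes> (inv z \<otimes> y)" using P(2) z by auto
      hence "b (inv z \<otimes> y) = 0" using y by (metis (mono_tags, lifting) DiffD2 image_eqI mem_Collect_eq)
      thus "b (inv z \<otimes> y) * c (inv y \<otimes> x) = 0" by simp
    qed
  qed
  also have "\<dots> = (\<Sum>w\<in>?Sb. b (inv z \<otimes> (z \<otimes> w)) * c (inv (z \<otimes> w) \<otimes> x))"
    by (rule sum.reindex_cong[of "\<lambda>w. z \<otimes> w"]) (use z Sb inj_on_mult_left in auto)
  also have "\<dots> = (\<Sum>w\<in>?Sb. b w * c (inv w \<otimes> (inv z \<otimes> x)))"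
    using z Sb x by (intro sum.cong refl) (auto simp: m_assoc[symmetric] inv_mult_group)
  also have "\<dots> = gr_mult G b c (inv z \<otimes> x)"
    using gr_mult_eq_supp_sum[OF b, of c "inv z \<otimes> x"] z x by simp
  finally show ?thesis .
qed

lemma gr_mult_assoc:
  assumes a: "gr_elem G a" and b: "gr_elem G b" and c: "gr_elem G c"
  shows "gr_mult G (gr_mult G a b) c = gr_mult G a (gr_mult G b c)"
proof
  fix x
  let ?Sa = "{y. a y \<noteq> 0}" and ?Sb = "{y. b y \<noteq> 0}"
  let ?P = "(\<lambda>(y, w). y \<otimes> w) ` (?Sa \<times> ?Sb)"
  have Sa: "finite ?Sa" "?Sa \<subseteq> carrier G" and Sb: "finite ?Sb" "?Sb \<subseteq> carrier G"
    using gr_elemD[OF a] gr_elemD[OF b] by auto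
  have P: "finite ?P" "?P \<subseteq> carrier G" using Sa Sb by auto
  show "gr_mult G (gr_mult G a b) c x = gr_mult G a (gr_mult G b c) x"
  proof (cases "x \<in> carrier G")
    case False thus ?thesis unfolding gr_mult_def by simp
  next
    case x: True
    have "gr_mult G (gr_mult G a b) c x = (\<Sum>y\<in>?P. gr_mult G a b y * c (inv y \<otimes> x))"
      using gr_mult_eq_sum[OF P, of "gr_mult G a b" c x] gr_supp_mult_subset[OF a, of b] x by auto
    also have "\<dots> = (\<Sum>y\<in>?P. \<Sum>z\<in>?Sa. a z * b (inv z \<otimes> y) * c (inv y \<otimes> x))"
      using P by (intro sum.cong refl) (auto simp: gr_mult_eq_supp_sum[OF a] sum_distrib_right)
    also have "\<dots> = (\<Sum>z\<in>?Sa. a z * (\<Sum>y\<in>?P. b (inv z \<otimes> y) * c (inv y \<otimes> x)))"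
      by (subst sum.swap) (simp add: sum_distrib_left mult.assoc)
    also have "\<dots> = (\<Sum>z\<in>?Sa. a z * gr_mult G b c (inv z \<otimes> x))"
    proof (intro sum.cong refl arg_cong2[where f = "(*)"])
      fix z assume "z \<in> ?Sa"
      thus "(\<Sum>y\<in>?P. b (inv z \<otimes> y) * c (inv y \<otimes> x)) = gr_mult G b c (inv z \<otimes> x)"
        using Sa by (intro gr_mult_eq_sum_translate[OF b _ x P]) auto
    qed
    also have "\<dots> = gr_mult G a (gr_mult G b c) x"
      using gr_mult_eq_supp_sum[OF a, of "gr_mult G b c" x] x by simp
    finally show ?thesis .
  qed
qed

lemma gr_elem_of: "g \<in> carrier G \<Longrightarrow> gr_elem G (gr_of G g)"
  unfolding gr_elem_def gr_of_def by auto

lemma gr_elem_one: "gr_elem G (gr_one G)"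
  unfolding gr_one_def by (simp add: gr_elem_of)

lemma gr_of_mult_left:
  assumes "g \<in> carrier G"
  shows "gr_mult G (gr_of G g) b = (\<lambda>x. if x \<in> carrier G then b (inv g \<otimes> x) else 0)"
proof
  fix x
  have "{y\<in>carrier G. gr_of G g y \<noteq> 0} = {g}" using assms by (auto simp: gr_of_def)
  thus "gr_mult G (gr_of G g) b x = (if x \<in> carrier G then b (inv g \<otimes> x) else 0)"
    unfolding gr_mult_def by (simp add: gr_of_def)
qed

lemma gr_of_mult_right:
  assumes a: "gr_elem G a" and h: "h \<in> carrier G"
  shows "gr_mult G a (gr_of G h) = (\<lambda>x. if x \<in> carrier G then a (x \<otimes> inv h) else 0)"
proof
  fix x
  show "gr_mult G a (gr_of G h) x = (if x \<in> carrier G then a (x \<otimes> inv h) else 0)"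
  proof (cases "x \<in> carrier G")
    case False thus ?thesis by (simp add: gr_mult_def)
  next
    case x: True
    have "gr_mult G a (gr_of G h) x = (\<Sum>y\<in>{x \<otimes> inv h}. a y * gr_of G h (inv y \<otimes> x))"
    proof (rule gr_mult_eq_sum_vanishing)
      show "finite {y \<in> carrier G. a y \<noteq> 0}" using gr_elemD(1)[OF a] by (auto intro: finite_subset)
      fix y assume y: "y \<in> carrier G" "y \<notin> {x \<otimes> inv h}"
      hence "inv y \<otimes> x \<noteq> h"
        using x h inv_solve_left[of h y x] inv_solve_right[of y x h] by auto
      thus "a y * gr_of G h (inv y \<otimes> x) = 0" by (simp add: gr_of_def)
    qed (use x h in auto)
    also have "\<dots> = a (x \<otimes> inv h)"
      using x h by (simp add: gr_of_def inv_mult_group m_assoc)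
    finally show ?thesis using x by simp
  qed
qed

lemma gr_of_mult_of:
  assumes "g \<in> carrier G" "h \<in> carrier G"
  shows "gr_mult G (gr_of G g) (gr_of G h) = gr_of G (g \<otimes> h)"
  unfolding gr_of_mult_left[OF assms(1)] using assms
  by (auto simp: gr_of_def m_assoc[symmetric] fun_eq_iff)

lemma gr_one_mult: "gr_elem G b \<Longrightarrow> gr_mult G (gr_one G) b = b"
  unfolding gr_one_def by (rule ext) (auto simp: gr_of_mult_left gr_elemD)

lemma gr_mult_one: "gr_elem G a \<Longrightarrow> gr_mult G a (gr_one G) = a"
  unfolding gr_one_def by (rule ext) (auto simp: gr_of_mult_right gr_elemD)

lemma gr_zero_mult: "gr_mult G gr_zero b = gr_zero"
  unfolding gr_mult_def gr_zero_def by auto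

lemma gr_mult_zero: "gr_mult G a gr_zero = gr_zero"
  unfolding gr_mult_def gr_zero_def by auto

lemma gr_elem_sum:
  assumes "finite I" "\<And>i. i \<in> I \<Longrightarrow> gr_elem G (a i)"
  shows "gr_elem G (\<lambda>x. \<Sum>i\<in>I. c i * a i x)"
proof -
  have "{x. (\<Sum>i\<in>I. c i * a i x) \<noteq> 0} \<subseteq> (\<Union>i\<in>I. {x. a i x \<noteq> 0})"
    by (auto dest: sum.not_neutral_contains_not_neutral)
  moreover have "finite (\<Union>i\<in>I. {x. a i x \<noteq> 0})" "(\<Union>i\<in>I. {x. a i x \<noteq> 0}) \<subseteq> carrier G"
    using assms gr_elemD by auto
  ultimately show ?thesis unfolding gr_elem_def by (auto intro: finite_subset)
qed

lemma gr_elem_lin: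
  assumes "gr_elem G a" "gr_elem G b"
  shows "gr_elem G (\<lambda>x. \<alpha> * a x + \<beta> * b x)"
proof -
  have "{x. \<alpha> * a x + \<beta> * b x \<noteq> 0} \<subseteq> {x. a x \<noteq> 0} \<union> {x. b x \<noteq> 0}" by auto
  thus ?thesis using assms unfolding gr_elem_def by (auto intro: finite_subset)
qed

lemma gr_mult_sum_left:
  assumes "finite I" "\<And>i. i \<in> I \<Longrightarrow> gr_elem G (a i)"
  shows "gr_mult G (\<lambda>x. \<Sum>i\<in>I. c i * a i x) b = (\<lambda>x. \<Sum>i\<in>I. c i * gr_mult G (a i) b x)"
proof
  fix x
  let ?A = "\<Union>i\<in>I. {x. a i x \<noteq> 0}"
  have A: "finite ?A" "?A \<subseteq> carrier G" using assms gr_elemD by auto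
  show "gr_mult G (\<lambda>x. \<Sum>i\<in>I. c i * a i x) b x = (\<Sum>i\<in>I. c i * gr_mult G (a i) b x)"
  proof (cases "x \<in> carrier G")
    case False thus ?thesis by (simp add: gr_mult_def)
  next
    case x: True
    have "gr_mult G (\<lambda>x. \<Sum>i\<in>I. c i * a i x) b x = (\<Sum>y\<in>?A. (\<Sum>i\<in>I. c i * a i y) * b (inv y \<otimes> x))"
      by (subst gr_mult_eq_sum[OF A]) (use x in \<open>auto dest: sum.not_neutral_contains_not_neutral\<close>)
    also have "\<dots> = (\<Sum>i\<in>I. c i * (\<Sum>y\<in>?A. a i y * b (inv y \<otimes> x)))"
      by (simp add: sum_distrib_left sum_distrib_right mult.assoc sum.swap[of _ I])
    also have "\<dots> = (\<Sum>i\<in>I. c i * gr_mult G (a i) b x)"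
      by (intro sum.cong refl arg_cong2[where f="(*)"], subst gr_mult_eq_sum[OF A]) (use x in auto)
    finally show ?thesis .
  qed
qed

lemma gr_mult_sum_right:
  assumes "finite I" "gr_elem G a"
  shows "gr_mult G a (\<lambda>x. \<Sum>i\<in>I. c i * b i x) = (\<lambda>x. \<Sum>i\<in>I. c i * gr_mult G a (b i) x)"
  by (rule ext) (simp add: gr_mult_eq_supp_sum[OF assms(2)] sum_distrib_left sum_distrib_right
      mult.assoc mult.left_commute sum.swap[of _ I])

lemma gr_mult_lin_left:
  assumes "gr_elem G a" "gr_elem G b"
  shows "gr_mult G (\<lambda>x. \<alpha> * a x + \<beta> * b x) c = (\<lambda>x. \<alpha> * gr_mult G a c x + \<beta> * gr_mult G b c x)"
proof
  fix x
  let ?A = "{x. a x \<noteq> 0} \<union> {x. b x \<noteq> 0}"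
  have A: "finite ?A" "?A \<subseteq> carrier G" using assms gr_elemD by auto
  show "gr_mult G (\<lambda>x. \<alpha> * a x + \<beta> * b x) c x = \<alpha> * gr_mult G a c x + \<beta> * gr_mult G b c x"
    by (subst (1 2 3) gr_mult_eq_sum[OF A]) (auto simp: sum_distrib_left sum.distrib algebra_simps)
qed

lemma gr_mult_lin_right:
  assumes "gr_elem G a"
  shows "gr_mult G a (\<lambda>x. \<alpha> * b x + \<beta> * c x) = (\<lambda>x. \<alpha> * gr_mult G a b x + \<beta> * gr_mult G a c x)"
  by (rule ext) (simp add: gr_mult_eq_supp_sum[OF assms] sum_distrib_left sum.distrib algebra_simps)

lemma gr_add_eq_lin: "gr_add a b = (\<lambda>x. 1 * a x + 1 * b x)"
  by (simp add: gr_add_def)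

lemma gr_diff_eq_lin: "gr_diff a b = (\<lambda>x. 1 * a x + (-1) * b x)"
  by (simp add: gr_diff_def)

lemma gr_scale_eq_lin: "gr_scale c a = (\<lambda>x. c * a x + 0 * a x)"
  by (simp add: gr_scale_def)

lemma gr_elem_add: "gr_elem G a \<Longrightarrow> gr_elem G b \<Longrightarrow> gr_elem G (gr_add a b)"
  unfolding gr_add_eq_lin by (rule gr_elem_lin)

lemma gr_elem_diff: "gr_elem G a \<Longrightarrow> gr_elem G b \<Longrightarrow> gr_elem G (gr_diff a b)"
  unfolding gr_diff_eq_lin by (rule gr_elem_lin)

lemma gr_mult_add_left:
  "gr_elem G a \<Longrightarrow> gr_elem G b \<Longrightarrow> gr_mult G (gr_add a b) c = gr_add (gr_mult G a c) (gr_mult G b c)"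
  unfolding gr_add_eq_lin by (rule gr_mult_lin_left)

lemma gr_mult_diff_left:
  "gr_elem G a \<Longrightarrow> gr_elem G b \<Longrightarrow> gr_mult G (gr_diff a b) c = gr_diff (gr_mult G a c) (gr_mult G b c)"
  unfolding gr_diff_eq_lin by (rule gr_mult_lin_left)

lemma gr_mult_diff_right:
  "gr_elem G a \<Longrightarrow> gr_mult G a (gr_diff b c) = gr_diff (gr_mult G a b) (gr_mult G a c)"
  unfolding gr_diff_eq_lin by (rule gr_mult_lin_right)

lemma gr_mult_scale_left:
  "gr_elem G a \<Longrightarrow> gr_mult G (gr_scale s a) c = gr_scale s (gr_mult G a c)"
  unfolding gr_scale_eq_lin by (rule gr_mult_lin_left)

lemma gr_elem_star:
  assumes a: "gr_elem G a"
  shows "gr_elem G (gr_star G a)"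
proof -
  have "{x. gr_star G a x \<noteq> 0} \<subseteq> (\<lambda>y. inv y) ` {x. a x \<noteq> 0}"
  proof
    fix x assume "x \<in> {x. gr_star G a x \<noteq> 0}"
    hence "x \<in> carrier G" "a (inv x) \<noteq> 0" by (auto simp: gr_star_def split: if_splits)
    thus "x \<in> (\<lambda>y. inv y) ` {x. a x \<noteq> 0}" by (metis (mono_tags, lifting) image_eqI inv_inv mem_Collect_eq)
  qed
  thus ?thesis using gr_elemD[OF a] unfolding gr_elem_def
    by (auto intro: finite_subset simp: gr_star_def split: if_splits)
qed

lemma gr_star_star: "gr_elem G a \<Longrightarrow> gr_star G (gr_star G a) = a"
  by (rule ext) (auto simp: gr_star_def gr_elemD)

lemma gr_star_of: "g \<in> carrier G \<Longrightarrow> gr_star G (gr_of G g) = gr_of G (inv g)"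
  by (rule ext) (auto simp: gr_star_def gr_of_def)

lemma gr_star_one: "gr_star G (gr_one G) = gr_one G"
  by (simp add: gr_one_def gr_star_of)

lemma gr_star_sum: "gr_star G (\<lambda>x. \<Sum>i\<in>I. c i * a i x) = (\<lambda>x. \<Sum>i\<in>I. cnj (c i) * gr_star G (a i) x)"
  by (rule ext) (simp add: gr_star_def)

lemma gr_star_diff: "gr_star G (gr_diff a b) = gr_diff (gr_star G a) (gr_star G b)"
  by (rule ext) (simp add: gr_star_def gr_diff_def)

lemma gr_star_mult:
  assumes a: "gr_elem G a" and b: "gr_elem G b"
  shows "gr_star G (gr_mult G a b) = gr_mult G (gr_star G b) (gr_star G a)"
proof
  fix x
  let ?Sa = "{y. a y \<noteq> 0}"
  have Sa: "finite ?Sa" "?Sa \<subseteq> carrier G" using gr_elemD[OF a] by auto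
  show "gr_star G (gr_mult G a b) x = gr_mult G (gr_star G b) (gr_star G a) x"
  proof (cases "x \<in> carrier G")
    case False thus ?thesis by (simp add: gr_mult_def gr_star_def)
  next
    case x: True
    have "gr_star G (gr_mult G a b) x = (\<Sum>y\<in>?Sa. cnj (a y) * cnj (b (inv y \<otimes> inv x)))"
      using x by (simp add: gr_star_def gr_mult_eq_supp_sum[OF a])
    also have "\<dots> = (\<Sum>z\<in>(\<lambda>y. x \<otimes> y) ` ?Sa. gr_star G b z * gr_star G a (inv z \<otimes> x))"
      by (rule sym, rule sum.reindex_cong[OF inj_on_mult_left[OF x Sa(2)] refl])
        (use x Sa in \<open>auto simp: gr_star_def inv_mult_group m_assoc\<close>)
    also have "\<dots> = gr_mult G (gr_star G b) (gr_star G a) x"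
    proof (rule gr_mult_eq_sum_vanishing[symmetric])
      show "finite {y \<in> carrier G. gr_star G b y \<noteq> 0}"
        using gr_elemD(1)[OF gr_elem_star[OF b]] by (auto intro: finite_subset)
      fix y assume y: "y \<in> carrier G" "y \<notin> (\<lambda>y. x \<otimes> y) ` ?Sa"
      have "x \<otimes> (inv x \<otimes> y) = y" using x y by (simp add: m_assoc[symmetric])
      hence "a (inv x \<otimes> y) = 0" using y by (metis (mono_tags, lifting) image_eqI mem_Collect_eq)
      thus "gr_star G b y * gr_star G a (inv y \<otimes> x) = 0"
        using x y by (simp add: gr_star_def inv_mult_group)
    qed (use x Sa in auto)
    finally show ?thesis .
  qed
qed

lemma gr_tr_mult:
  assumes "gr_elem G a"
  shows "gr_tr G (gr_mult G a b) = (\<Sum>y\<in>{y. a y \<noteq> 0}. a y * b (inv y))"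
  unfolding gr_tr_def gr_mult_eq_supp_sum[OF assms] using gr_elemD(2)[OF assms]
  by (auto intro!: sum.cong)

lemma gr_tr_mult_commute:
  assumes a: "gr_elem G a" and b: "gr_elem G b"
  shows "gr_tr G (gr_mult G a b) = gr_tr G (gr_mult G b a)"
proof -
  let ?Sa = "{y. a y \<noteq> 0}"
  have Sa: "finite ?Sa" "?Sa \<subseteq> carrier G" using gr_elemD[OF a] by auto
  have "gr_tr G (gr_mult G a b) = (\<Sum>y\<in>?Sa. a y * b (inv y))"
    by (rule gr_tr_mult[OF a])
  also have "\<dots> = (\<Sum>z\<in>(\<lambda>y. inv y) ` ?Sa. b z * a (inv z \<otimes> \<one>))"
    by (rule sym, rule sum.reindex_cong[of "\<lambda>y. inv y"]) (use Sa inv_inj in \<open>auto intro: inj_on_subset\<close>)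
  also have "\<dots> = gr_mult G b a \<one>"
  proof (rule gr_mult_eq_sum_vanishing[symmetric])
    show "finite {y \<in> carrier G. b y \<noteq> 0}" using gr_elemD(1)[OF b] by (auto intro: finite_subset)
    fix y assume y: "y \<in> carrier G" "y \<notin> (\<lambda>y. inv y) ` ?Sa"
    hence "a (inv y) = 0" by (metis (mono_tags, lifting) image_eqI inv_inv mem_Collect_eq)
    thus "b y * a (inv y \<otimes> \<one>) = 0" using y by simp
  qed (use Sa in auto)
  finally show ?thesis by (simp add: gr_tr_def)
qed

lemma gr_tr_projection:
  assumes "gr_projection G p"
  shows "gr_tr G p = complex_of_real (\<Sum>y\<in>{y. p y \<noteq> 0}. (cmod (p y))\<^sup>2)"
proof -
  have p: "gr_elem G p" "gr_star G p = p" "gr_mult G p p = p"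
    using assms by (auto simp: gr_projection_def)
  have "gr_tr G p = gr_tr G (gr_mult G p (gr_star G p))" using p by simp
  also have "\<dots> = (\<Sum>y\<in>{y. p y \<noteq> 0}. complex_of_real ((cmod (p y))\<^sup>2))"
    unfolding gr_tr_mult[OF p(1)] using gr_elemD(2)[OF p(1)]
    by (intro sum.cong refl) (auto simp: gr_star_def complex_norm_square[symmetric])
  finally show ?thesis by simp
qed

lemma gr_projection_compl:
  assumes "gr_projection G p"
  shows "gr_projection G (gr_diff (gr_one G) p)"
    and "gr_mult G p (gr_diff (gr_one G) p) = gr_zero"
    and "gr_mult G (gr_diff (gr_one G) p) p = gr_zero"
proof -
  have p: "gr_elem G p" "gr_star G p = p" "gr_mult G p p = p"
    using assms by (auto simp: gr_projection_def)
  let ?p' = "gr_diff (gr_one G) p"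
  have p': "gr_elem G ?p'" by (intro gr_elem_diff gr_elem_one p)
  show pp': "gr_mult G p ?p' = gr_zero"
    unfolding gr_mult_diff_right[OF p(1)] gr_mult_one[OF p(1)] p(3)
    by (simp add: gr_diff_def gr_zero_def)
  show "gr_mult G ?p' p = gr_zero"
    unfolding gr_mult_diff_left[OF gr_elem_one p(1)] gr_one_mult[OF p(1)] p(3)
    by (simp add: gr_diff_def gr_zero_def)
  have "gr_mult G ?p' ?p' = gr_diff (gr_mult G (gr_one G) ?p') (gr_mult G p ?p')"
    by (rule gr_mult_diff_left[OF gr_elem_one p(1)])
  also have "\<dots> = ?p'" unfolding pp' gr_one_mult[OF p'] by (simp add: gr_diff_def gr_zero_def)
  finally show "gr_projection G ?p'"
    using p' p(2) by (simp add: gr_projection_def gr_star_diff gr_star_one)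
qed

lemma gr_tr_projection_lt_1:
  assumes p: "gr_projection G p" and "p \<noteq> gr_one G"
  shows "norm (gr_tr G p) < 1"
proof -
  define p' where "p' = gr_diff (gr_one G) p"
  define s where "s = (\<Sum>y\<in>{y. p y \<noteq> 0}. (cmod (p y))\<^sup>2)"
  define s' where "s' = (\<Sum>y\<in>{y. p' y \<noteq> 0}. (cmod (p' y))\<^sup>2)"
  have p': "gr_projection G p'" unfolding p'_def by (rule gr_projection_compl(1)[OF p])
  have "p' \<noteq> gr_zero"
  proof
    assume "p' = gr_zero"
    hence "p = gr_one G" by (auto simp: p'_def gr_diff_def gr_zero_def fun_eq_iff)
    thus False using assms(2) by simp
  qed
  then obtain y where y: "p' y \<noteq> 0" by (auto simp: gr_zero_def)
  have "finite {y. p' y \<noteq> 0}" using p' gr_elemD(1) by (auto simp: gr_projection_def)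
  hence "0 < s'" unfolding s'_def using y by (intro sum_pos2[of _ y]) auto
  have "gr_tr G p' = 1 - gr_tr G p"
    by (simp add: p'_def gr_tr_def gr_diff_def gr_one_def gr_of_def)
  hence "complex_of_real s' = complex_of_real (1 - s)"
    unfolding s_def s'_def gr_tr_projection[OF p'] gr_tr_projection[OF p] by simp
  hence "s' = 1 - s" by (simp only: of_real_eq_iff)
  moreover have "0 \<le> s" unfolding s_def by (simp add: sum_nonneg)
  ultimately show ?thesis using \<open>0 < s'\<close> unfolding gr_tr_projection[OF p] s_def[symmetric] by simp
qed

end

section \<open>The wreath product\<close>

lemma wreath_simps:
  "carrier (wreath U) = {(f, k). (\<forall>n. f n \<in> carrier U) \<and> finite {n. f n \<noteq> \<one>\<^bsub>U\<^esub>}}"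
  "(f, k) \<otimes>\<^bsub>wreath U\<^esub> (g, l) = (\<lambda>n. f n \<otimes>\<^bsub>U\<^esub> g (n + k), k + l)"
  "\<one>\<^bsub>wreath U\<^esub> = (\<lambda>_. \<one>\<^bsub>U\<^esub>, 0)"
  by (simp_all add: wreath_def)

context group
begin

lemma wreath_inv_closed:
  assumes "(f, k) \<in> carrier (wreath G)"
  shows "(\<lambda>n. inv (f (n - k)), - k) \<in> carrier (wreath G)"
proof -
  have "{n. inv (f (n - k)) \<noteq> \<one>} \<subseteq> (\<lambda>m. m + k) ` {m. f m \<noteq> \<one>}"
  proof
    fix n assume "n \<in> {n. inv (f (n - k)) \<noteq> \<one>}"
    hence "f (n - k) \<noteq> \<one>" by auto
    thus "n \<in> (\<lambda>m. m + k) ` {m. f m \<noteq> \<one>}" by (auto intro: image_eqI[of n _ "n - k"])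
  qed
  thus ?thesis using assms by (auto simp: wreath_simps intro: finite_subset)
qed

lemma wreath_group: "group (wreath G)"
proof (rule groupI)
  fix x y assume x: "x \<in> carrier (wreath G)" and y: "y \<in> carrier (wreath G)"
  obtain f k g l where xy: "x = (f, k)" "y = (g, l)" by (cases x, cases y)
  have "{n. f n \<otimes> g (n + k) \<noteq> \<one>} \<subseteq> {n. f n \<noteq> \<one>} \<union> (\<lambda>m. m - k) ` {m. g m \<noteq> \<one>}"
  proof
    fix n assume n: "n \<in> {n. f n \<otimes> g (n + k) \<noteq> \<one>}"
    show "n \<in> {n. f n \<noteq> \<one>} \<union> (\<lambda>m. m - k) ` {m. g m \<noteq> \<one>}"
    proof (cases "f n = \<one>")
      case True
      hence "g (n + k) \<noteq> \<one>" using n y xy by (auto simp: wreath_simps)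
      thus ?thesis by (auto intro: image_eqI[of n _ "n + k"])
    qed simp
  qed
  moreover have "finite ({n. f n \<noteq> \<one>} \<union> (\<lambda>m. m - k) ` {m. g m \<noteq> \<one>})"
    using x y xy by (auto simp: wreath_simps)
  ultimately show "x \<otimes>\<^bsub>wreath G\<^esub> y \<in> carrier (wreath G)"
    using x y xy by (auto simp: wreath_simps intro: finite_subset)
next
  fix x y z assume "x \<in> carrier (wreath G)" "y \<in> carrier (wreath G)" "z \<in> carrier (wreath G)"
  thus "x \<otimes>\<^bsub>wreath G\<^esub> y \<otimes>\<^bsub>wreath G\<^esub> z = x \<otimes>\<^bsub>wreath G\<^esub> (y \<otimes>\<^bsub>wreath G\<^esub> z)"
    by (cases x, cases y, cases z) (auto simp: wreath_simps m_assoc add.assoc)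
next
  fix x assume x: "x \<in> carrier (wreath G)"
  thus "\<one>\<^bsub>wreath G\<^esub> \<otimes>\<^bsub>wreath G\<^esub> x = x" by (cases x) (auto simp: wreath_simps)
  obtain f k where xf: "x = (f, k)" by (cases x)
  have "(\<lambda>n. inv (f (n - k)), - k) \<otimes>\<^bsub>wreath G\<^esub> x = \<one>\<^bsub>wreath G\<^esub>"
    using x xf by (auto simp: wreath_simps)
  thus "\<exists>y\<in>carrier (wreath G). y \<otimes>\<^bsub>wreath G\<^esub> x = \<one>\<^bsub>wreath G\<^esub>"
    using wreath_inv_closed x xf by blast
qed (simp add: wreath_simps)

lemma wreath_inv:
  assumes "(f, k) \<in> carrier (wreath G)"
  shows "inv\<^bsub>wreath G\<^esub> (f, k) = (\<lambda>n. inv (f (n - k)), - k)"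
  by (rule group.inv_equality[OF wreath_group _ assms wreath_inv_closed[OF assms]])
    (use assms in \<open>auto simp: wreath_simps\<close>)

interpretation W: group "wreath G" by (rule wreath_group)

lemma wr_t_int_pow: "wr_t G [^]\<^bsub>wreath G\<^esub> i = (\<lambda>_. \<one>, i)"
proof -
  have nat_pow: "wr_t G [^]\<^bsub>wreath G\<^esub> n = (\<lambda>_. \<one>, int n)" for n :: nat
    by (induction n) (auto simp: wr_t_def wreath_simps)
  show ?thesis
  proof (cases "i < 0")
    case True
    hence "wr_t G [^]\<^bsub>wreath G\<^esub> i = inv\<^bsub>wreath G\<^esub> (\<lambda>_. \<one>, int (nat (- i)))"
      by (simp add: int_pow_def2 nat_pow)
    also have "\<dots> = (\<lambda>_. \<one>, i)" using True by (subst wreath_inv) (auto simp: wreath_simps)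
    finally show ?thesis .
  qed (simp add: int_pow_def2 nat_pow)
qed

lemma wr_tpow_eq: "wr_tpow G i = gr_of (wreath G) (\<lambda>_. \<one>, i)"
  by (simp add: wr_tpow_def wr_t_int_pow)

lemma wreath_inv_tpow: "inv\<^bsub>wreath G\<^esub> (\<lambda>_. \<one>, i) = (\<lambda>_. \<one>, - i)"
  by (subst wreath_inv) (auto simp: wreath_simps)

lemma gr_elem_wr_tpow: "gr_elem (wreath G) (wr_tpow G i)"
  unfolding wr_tpow_eq by (rule W.gr_elem_of) (simp add: wreath_simps)

lemma wr_tpow_mult: "gr_mult (wreath G) (wr_tpow G i) (wr_tpow G j) = wr_tpow G (i + j)"
  unfolding wr_tpow_eq by (subst W.gr_of_mult_of) (auto simp: wreath_simps)

lemma wr_tpow_zero: "wr_tpow G 0 = gr_one (wreath G)"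
  by (simp add: wr_tpow_eq gr_one_def wreath_simps)

lemma wr_tpow_cancel: "gr_elem (wreath G) a \<Longrightarrow>
    gr_mult (wreath G) (wr_tpow G i) (gr_mult (wreath G) (wr_tpow G (- i)) a) = a"
  by (simp add: W.gr_mult_assoc[symmetric] gr_elem_wr_tpow wr_tpow_mult wr_tpow_zero W.gr_one_mult)

lemma gr_star_wr_tpow: "gr_star (wreath G) (wr_tpow G i) = wr_tpow G (- i)"
  by (simp add: wr_tpow_eq W.gr_star_of wreath_simps wreath_inv_tpow)

lemma wr_tpow_mult_left: "gr_mult (wreath G) (wr_tpow G i) a =
    (\<lambda>x. if x \<in> carrier (wreath G) then a ((\<lambda>_. \<one>, - i) \<otimes>\<^bsub>wreath G\<^esub> x) else 0)"
  unfolding wr_tpow_eq by (subst W.gr_of_mult_left) (auto simp: wreath_simps wreath_inv_tpow)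

lemma wr_tpow_mult_right: "gr_elem (wreath G) a \<Longrightarrow> gr_mult (wreath G) a (wr_tpow G i) =
    (\<lambda>x. if x \<in> carrier (wreath G) then a (x \<otimes>\<^bsub>wreath G\<^esub> (\<lambda>_. \<one>, - i)) else 0)"
  unfolding wr_tpow_eq by (subst W.gr_of_mult_right) (auto simp: wreath_simps wreath_inv_tpow)

end

section \<open>Elementary tensors over the base group\<close>

(* For finite J, wr_tensor U J c is the product in C[U wr Z] of copies of the c j placed at the
   positions j of J: the elementary tensor of the c j in C[U]^(tensor J), which embeds in
   C[U wr Z] because copies of U at distinct positions commute. *)
definition wr_tensor :: "('u,'z) monoid_scheme \<Rightarrow> int set \<Rightarrow> (int \<Rightarrow> 'u \<Rightarrow> complex)
    \<Rightarrow> ((int \<Rightarrow> 'u) \<times> int \<Rightarrow> complex)" where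
  "wr_tensor U J c = (\<lambda>(g, k).
     if k = 0 \<and> (\<forall>n. g n \<in> carrier U) \<and> (\<forall>n. n \<notin> J \<longrightarrow> g n = \<one>\<^bsub>U\<^esub>)
     then (\<Prod>j\<in>J. c j (g j)) else 0)"

definition wr_fill :: "('u,'z) monoid_scheme \<Rightarrow> int set \<Rightarrow> (int \<Rightarrow> 'u) \<Rightarrow> int \<Rightarrow> 'u" where
  "wr_fill U J h = (\<lambda>n. if n \<in> J then h n else \<one>\<^bsub>U\<^esub>)"

context group
begin

interpretation W: group "wreath G" by (rule wreath_group)

lemma wr_tensor_carrier:
  assumes "finite J" "wr_tensor G J c x \<noteq> 0"
  shows "x \<in> carrier (wreath G)"
proof -
  obtain g k where x: "x = (g, k)" by (cases x)
  have "\<forall>n. g n \<in> carrier G" "{n. g n \<noteq> \<one>} \<subseteq> J"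
    using assms(2) x by (auto simp: wr_tensor_def split: if_splits)
  thus ?thesis using x assms(1) by (auto simp: wreath_simps intro: finite_subset)
qed

lemma wr_tensor_supp:
  assumes "finite J"
  shows "{x. wr_tensor G J c x \<noteq> 0} \<subseteq> (\<lambda>h. (wr_fill G J h, 0)) ` PiE J (\<lambda>j. {u. c j u \<noteq> 0})"
proof
  fix x assume "x \<in> {x. wr_tensor G J c x \<noteq> 0}"
  then obtain g where x: "x = (g, 0)" and off: "\<And>n. n \<notin> J \<Longrightarrow> g n = \<one>"
    and p: "(\<Prod>j\<in>J. c j (g j)) \<noteq> 0"
    by (cases x) (auto simp: wr_tensor_def split: if_splits)
  have "restrict g J \<in> PiE J (\<lambda>j. {u. c j u \<noteq> 0})" using p assms by (auto simp: prod_zero_iff)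
  moreover have "wr_fill G J (restrict g J) = g" using off by (auto simp: wr_fill_def)
  ultimately show "x \<in> (\<lambda>h. (wr_fill G J h, 0)) ` PiE J (\<lambda>j. {u. c j u \<noteq> 0})"
    using x by (metis (no_types, lifting) image_eqI)
qed

lemma wr_fill_carrier:
  assumes "finite J" "\<And>j. j \<in> J \<Longrightarrow> h j \<in> carrier G"
  shows "(wr_fill G J h, 0) \<in> carrier (wreath G)"
proof -
  have "{n. wr_fill G J h n \<noteq> \<one>} \<subseteq> J" by (auto simp: wr_fill_def)
  thus ?thesis using assms by (auto simp: wreath_simps wr_fill_def intro: finite_subset)
qed

lemma inj_on_wr_fill: "inj_on (\<lambda>h. (wr_fill G J h, 0::int)) (PiE J B)"
proof (rule inj_onI)
  fix h h' assume h: "h \<in> PiE J B" "h' \<in> PiE J B"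
    and eq: "(wr_fill G J h, 0::int) = (wr_fill G J h', 0)"
  show "h = h'"
  proof
    fix n
    have "wr_fill G J h n = wr_fill G J h' n" using eq by simp
    thus "h n = h' n" using h by (cases "n \<in> J") (auto simp: wr_fill_def PiE_def extensional_def)
  qed
qed

lemma gr_elem_wr_tensor:
  assumes J: "finite J" and c: "\<And>j. j \<in> J \<Longrightarrow> gr_elem G (c j)"
  shows "gr_elem (wreath G) (wr_tensor G J c)"
proof -
  have "finite (PiE J (\<lambda>j. {u. c j u \<noteq> 0}))" using J c gr_elemD(1) by (intro finite_PiE) auto
  hence "finite {x. wr_tensor G J c x \<noteq> 0}" by (rule finite_surj[OF _ wr_tensor_supp[OF J]])
  thus ?thesis using wr_tensor_carrier[OF J] by (auto simp: gr_elem_def)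
qed

lemma wr_tensor_cong: "(\<And>j. j \<in> J \<Longrightarrow> c j = c' j) \<Longrightarrow> wr_tensor G J c = wr_tensor G J c'"
  unfolding wr_tensor_def by (rule ext, clarify) (auto intro!: prod.cong)

lemma wr_tensor_extend:
  assumes K: "finite K" and JK: "J \<subseteq> K" and same: "\<And>j. j \<in> J \<Longrightarrow> c' j = c j"
    and one: "\<And>j. j \<in> K - J \<Longrightarrow> c' j = gr_one G"
  shows "wr_tensor G J c = wr_tensor G K c'"
proof (rule ext, clarify)
  fix g k
  show "wr_tensor G J c (g, k) = wr_tensor G K c' (g, k)"
  proof (cases "k = 0 \<and> (\<forall>n. g n \<in> carrier G)")
    case False thus ?thesis by (auto simp: wr_tensor_def)
  next
    case True
    show ?thesis
    proof (cases "\<forall>n. n \<notin> J \<longrightarrow> g n = \<one>")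
      case off: True
      have "(\<Prod>j\<in>K. c' j (g j)) = (\<Prod>j\<in>J. c' j (g j)) * (\<Prod>j\<in>K - J. c' j (g j))"
        using K JK by (metis mult.commute prod.subset_diff)
      also have "(\<Prod>j\<in>K - J. c' j (g j)) = 1"
        using off one by (intro prod.neutral) (auto simp: gr_one_def gr_of_def)
      finally show ?thesis using True off same JK by (auto simp: wr_tensor_def)
    next
      case False
      then obtain n where n: "n \<notin> J" "g n \<noteq> \<one>" by auto
      have "(\<Prod>j\<in>K. c' j (g j)) = 0" if "n \<in> K"
        using that n one K by (intro prod_zero bexI[of _ n]) (auto simp: gr_one_def gr_of_def)
      thus ?thesis using n by (auto simp: wr_tensor_def)
    qed
  qed
qed

lemma wr_tensor_eq_zero:
  assumes "finite J" "j \<in> J" "c j = gr_zero"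
  shows "wr_tensor G J c = gr_zero"
  using assms by (auto simp: wr_tensor_def gr_zero_def fun_eq_iff prod_zero_iff)

lemma gr_one_eq_wr_tensor: "gr_one (wreath G) = wr_tensor G {} c"
  by (rule ext, clarify) (auto simp: gr_one_def gr_of_def wr_tensor_def wreath_simps fun_eq_iff)

lemma wr_tensor_singleton_diff:
  "gr_diff (wr_tensor G {i} (\<lambda>_. a)) (wr_tensor G {i} (\<lambda>_. b)) = wr_tensor G {i} (\<lambda>_. gr_diff a b)"
  by (rule ext, clarify) (auto simp: gr_diff_def wr_tensor_def)

lemma gr_tr_wr_tensor: "gr_tr (wreath G) (wr_tensor G J c) = (\<Prod>j\<in>J. gr_tr G (c j))"
  by (simp add: gr_tr_def wr_tensor_def wreath_simps)

lemma gr_star_wr_tensor: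
  assumes J: "finite J"
  shows "gr_star (wreath G) (wr_tensor G J c) = wr_tensor G J (\<lambda>j. gr_star G (c j))"
proof (rule ext, clarify)
  fix g k
  show "gr_star (wreath G) (wr_tensor G J c) (g, k) = wr_tensor G J (\<lambda>j. gr_star G (c j)) (g, k)"
  proof (cases "(g, k) \<in> carrier (wreath G)")
    case False
    hence "wr_tensor G J (\<lambda>j. gr_star G (c j)) (g, k) = 0" using wr_tensor_carrier[OF J] by blast
    thus ?thesis using False by (simp add: gr_star_def)
  next
    case True
    hence g: "\<And>n. g n \<in> carrier G" by (auto simp: wreath_simps)
    have "(\<forall>n. n \<notin> J \<longrightarrow> inv (g n) = \<one>) \<longleftrightarrow> (\<forall>n. n \<notin> J \<longrightarrow> g n = \<one>)"
      using g by (metis inv_inv inv_one)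
    thus ?thesis using True g by (auto simp: gr_star_def wreath_inv wr_tensor_def)
  qed
qed

lemma gr_map_wr_emb:
  "gr_map G (wreath G) (wr_emb G) e = wr_tensor G {0} (\<lambda>_. e)"
proof (rule ext, clarify)
  fix g k
  show "gr_map G (wreath G) (wr_emb G) e (g, k) = wr_tensor G {0} (\<lambda>_. e) (g, k)"
  proof (cases "(g, k) \<in> carrier (wreath G)")
    case False
    hence "wr_tensor G {0} (\<lambda>_. e) (g, k) = 0" using wr_tensor_carrier[of "{0}"] by blast
    thus ?thesis using False by (simp add: gr_map_def)
  next
    case True
    hence g: "\<And>n. g n \<in> carrier G" by (auto simp: wreath_simps)
    have "{x \<in> carrier G. e x \<noteq> 0 \<and> wr_emb G x = (g, k)} =
        (if k = 0 \<and> (\<forall>n. n \<noteq> 0 \<longrightarrow> g n = \<one>) \<and> e (g 0) \<noteq> 0 then {g 0} else {})"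
      using g by (auto simp: wr_emb_def fun_eq_iff)
    thus ?thesis using True g by (auto simp: gr_map_def wr_tensor_def)
  qed
qed

lemma wr_tensor_mult_summand:
  assumes J: "finite J" and h: "\<And>j. j \<in> J \<Longrightarrow> h j \<in> carrier G" and g: "\<And>n. g n \<in> carrier G"
  shows "wr_tensor G J c (wr_fill G J h, 0) *
      wr_tensor G J d (inv\<^bsub>wreath G\<^esub> (wr_fill G J h, 0) \<otimes>\<^bsub>wreath G\<^esub> (g, k)) =
    (if k = 0 \<and> (\<forall>n. n \<notin> J \<longrightarrow> g n = \<one>)
     then (\<Prod>j\<in>J. c j (h j) * d j (inv (h j) \<otimes> g j)) else 0)"
proof -
  have fill: "\<And>n. wr_fill G J h n \<in> carrier G" using h by (auto simp: wr_fill_def)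
  have "inv\<^bsub>wreath G\<^esub> (wr_fill G J h, 0) \<otimes>\<^bsub>wreath G\<^esub> (g, k) = (\<lambda>n. inv (wr_fill G J h n) \<otimes> g n, k)"
    using wreath_inv[OF wr_fill_carrier[OF J h]] by (simp add: wreath_simps)
  moreover have "wr_tensor G J c (wr_fill G J h, 0) = (\<Prod>j\<in>J. c j (h j))"
    using fill by (auto simp: wr_tensor_def wr_fill_def intro!: prod.cong)
  moreover have "(\<forall>n. n \<notin> J \<longrightarrow> inv (wr_fill G J h n) \<otimes> g n = \<one>) \<longleftrightarrow> (\<forall>n. n \<notin> J \<longrightarrow> g n = \<one>)"
    using g by (auto simp: wr_fill_def)
  moreover have "(\<Prod>j\<in>J. d j (inv (wr_fill G J h j) \<otimes> g j)) = (\<Prod>j\<in>J. d j (inv (h j) \<otimes> g j))"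
    by (rule prod.cong) (auto simp: wr_fill_def)
  ultimately show ?thesis using fill g by (auto simp: wr_tensor_def prod.distrib)
qed

lemma wr_tensor_mult:
  assumes J: "finite J" and c: "\<And>j. j \<in> J \<Longrightarrow> gr_elem G (c j)"
  shows "gr_mult (wreath G) (wr_tensor G J c) (wr_tensor G J d) =
    wr_tensor G J (\<lambda>j. gr_mult G (c j) (d j))"
proof (rule ext, clarify)
  fix g k
  let ?S = "\<lambda>j. {u. c j u \<noteq> 0}"
  let ?P = "PiE J ?S"
  let ?A = "(\<lambda>h. (wr_fill G J h, 0::int)) ` ?P"
  have S: "\<And>j. j \<in> J \<Longrightarrow> finite (?S j)" "\<And>j. j \<in> J \<Longrightarrow> ?S j \<subseteq> carrier G"
    using c gr_elemD by auto
  have P: "\<And>h j. h \<in> ?P \<Longrightarrow> j \<in> J \<Longrightarrow> h j \<in> carrier G" using S(2) by blast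
  have A: "finite ?A" "?A \<subseteq> carrier (wreath G)"
    using J S wr_fill_carrier[OF J] P by (auto intro!: finite_PiE)
  show "gr_mult (wreath G) (wr_tensor G J c) (wr_tensor G J d) (g, k) =
      wr_tensor G J (\<lambda>j. gr_mult G (c j) (d j)) (g, k)"
  proof (cases "(g, k) \<in> carrier (wreath G)")
    case False
    hence "wr_tensor G J (\<lambda>j. gr_mult G (c j) (d j)) (g, k) = 0" using wr_tensor_carrier[OF J] by blast
    thus ?thesis using False by (simp add: gr_mult_def)
  next
    case True
    hence g: "\<And>n. g n \<in> carrier G" by (auto simp: wreath_simps)
    let ?cond = "k = 0 \<and> (\<forall>n. n \<notin> J \<longrightarrow> g n = \<one>)"
    have supp: "{y \<in> carrier (wreath G). wr_tensor G J c y \<noteq> 0} \<subseteq> ?A"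
      using wr_tensor_supp[OF J, of c] by blast
    have "gr_mult (wreath G) (wr_tensor G J c) (wr_tensor G J d) (g, k) = (\<Sum>y\<in>?A.
        wr_tensor G J c y * wr_tensor G J d (inv\<^bsub>wreath G\<^esub> y \<otimes>\<^bsub>wreath G\<^esub> (g, k)))"
      using W.gr_mult_eq_sum[OF A supp] True by simp
    also have "\<dots> = (\<Sum>h\<in>?P. if ?cond then (\<Prod>j\<in>J. c j (h j) * d j (inv (h j) \<otimes> g j)) else 0)"
      by (subst sum.reindex[OF inj_on_wr_fill])
        (auto intro!: sum.cong wr_tensor_mult_summand[OF J _ g] P)
    also have "\<dots> = (if ?cond then (\<Prod>j\<in>J. \<Sum>u\<in>?S j. c j u * d j (inv u \<otimes> g j)) else 0)"
    proof (cases ?cond)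
      case True thus ?thesis by (simp add: prod_sum_PiE[OF J] S)
    next
      case False thus ?thesis by (simp only: False if_False sum.neutral_const)
    qed
    also have "\<dots> = wr_tensor G J (\<lambda>j. gr_mult G (c j) (d j)) (g, k)"
      using g by (auto simp: wr_tensor_def gr_mult_eq_supp_sum[OF c] intro!: prod.cong)
    finally show ?thesis .
  qed
qed

lemma wr_tensor_mult_union:
  assumes J: "finite J" and K: "finite K" and c: "\<And>j. j \<in> J \<Longrightarrow> gr_elem G (c j)"
  shows "gr_mult (wreath G) (wr_tensor G J c) (wr_tensor G K d) =
    wr_tensor G (J \<union> K) (\<lambda>l. gr_mult G (if l \<in> J then c l else gr_one G) (if l \<in> K then d l else gr_one G))"
proof -
  have "wr_tensor G J c = wr_tensor G (J \<union> K) (\<lambda>l. if l \<in> J then c l else gr_one G)"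
    by (rule wr_tensor_extend) (use J K in auto)
  moreover have "wr_tensor G K d = wr_tensor G (J \<union> K) (\<lambda>l. if l \<in> K then d l else gr_one G)"
    by (rule wr_tensor_extend) (use J K in auto)
  ultimately show ?thesis
    by (simp only:) (rule wr_tensor_mult, use J K c gr_elem_one in auto)
qed

lemma gr_prod_wr_tensor:
  assumes "distinct xs" "\<And>i. i \<in> set xs \<Longrightarrow> gr_elem G (c i)"
  shows "gr_prod (wreath G) (map (\<lambda>i. wr_tensor G {i} (\<lambda>_. c i)) xs) = wr_tensor G (set xs) c"
  using assms
proof (induction xs)
  case Nil
  thus ?case by (simp add: gr_prod_def gr_one_eq_wr_tensor)
next
  case (Cons i xs)
  have "gr_prod (wreath G) (map (\<lambda>i. wr_tensor G {i} (\<lambda>_. c i)) (i # xs)) =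
      gr_mult (wreath G) (wr_tensor G {i} (\<lambda>_. c i)) (wr_tensor G (set xs) c)"
    using Cons by (simp add: gr_prod_def)
  also have "\<dots> = wr_tensor G ({i} \<union> set xs) (\<lambda>l. gr_mult G (if l \<in> {i} then c i else gr_one G)
      (if l \<in> set xs then c l else gr_one G))"
    by (rule wr_tensor_mult_union) (use Cons.prems in auto)
  also have "\<dots> = wr_tensor G (set (i # xs)) c"
    by (simp, rule wr_tensor_cong) (use Cons.prems in \<open>auto simp: gr_mult_one gr_one_mult\<close>)
  finally show ?case .
qed

lemma wr_tensor_conj_tpow:
  assumes J: "finite J" and c: "\<And>j. j \<in> J \<Longrightarrow> gr_elem G (c j)"
  shows "gr_mult (wreath G) (gr_mult (wreath G) (wr_tpow G (- k)) (wr_tensor G J c)) (wr_tpow G k)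
     = wr_tensor G ((\<lambda>j. j + k) ` J) (\<lambda>j. c (j - k))"
proof (rule ext, clarify)
  fix g l
  let ?lhs = "gr_mult (wreath G) (gr_mult (wreath G) (wr_tpow G (- k)) (wr_tensor G J c)) (wr_tpow G k)"
  have el: "gr_elem (wreath G) (gr_mult (wreath G) (wr_tpow G (- k)) (wr_tensor G J c))"
    by (intro W.gr_elem_mult gr_elem_wr_tpow gr_elem_wr_tensor J c)
  show "?lhs (g, l) = wr_tensor G ((\<lambda>j. j + k) ` J) (\<lambda>j. c (j - k)) (g, l)"
  proof (cases "(g, l) \<in> carrier (wreath G)")
    case False
    hence "wr_tensor G ((\<lambda>j. j + k) ` J) (\<lambda>j. c (j - k)) (g, l) = 0"
      using wr_tensor_carrier[of "(\<lambda>j. j + k) ` J"] J by blast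
    thus ?thesis using False by (simp add: wr_tpow_mult_right[OF el])
  next
    case True
    hence g: "\<And>n. g n \<in> carrier G" by (auto simp: wreath_simps)
    have "?lhs (g, l) = wr_tensor G J c (\<lambda>n. g (n + k), l)"
      unfolding wr_tpow_mult_right[OF el] using True g by (simp add: wr_tpow_mult_left wreath_simps)
    moreover have "(\<forall>n. n \<notin> J \<longrightarrow> g (n + k) = \<one>) \<longleftrightarrow> (\<forall>n. n \<notin> (\<lambda>j. j + k) ` J \<longrightarrow> g n = \<one>)"
      by (metis (no_types, lifting) add_diff_cancel_right' diff_add_cancel image_iff)
    moreover have "(\<Prod>j\<in>(\<lambda>j. j + k) ` J. c (j - k) (g j)) = (\<Prod>j\<in>J. c j (g (j + k)))"
      by (subst prod.reindex) (auto intro: inj_onI)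
    ultimately show ?thesis using g by (auto simp: wr_tensor_def)
  qed
qed

end

section \<open>Eigenvectors of the path graph\<close>

lemma orthogonal_diagonalization_left_eigen:
  fixes A B :: "'a::field mat"
  assumes B: "B \<in> carrier_mat n n" and A: "A \<in> carrier_mat n n"
    and orth: "B * transpose_mat B = 1\<^sub>m n" and diag: "B * A * transpose_mat B = D"
  shows "B * A = D * B"
proof -
  have BA: "B * A \<in> carrier_mat n n" using A B by simp
  have "transpose_mat B * B = 1\<^sub>m n"
    by (rule mat_mult_left_right_inverse[OF B _ orth]) (use B in simp)
  hence "B * A = B * A * (transpose_mat B * B)" by (simp add: right_mult_one_mat[OF BA])
  also have "\<dots> = B * A * transpose_mat B * B"
    by (rule assoc_mult_mat[symmetric, OF BA _ B]) (use B in simp)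
  finally show ?thesis unfolding diag .
qed

(* Indexed from 1, as A_n and B_n in the paper. *)
definition mat_1based :: "nat \<Rightarrow> (nat \<Rightarrow> nat \<Rightarrow> 'a) \<Rightarrow> 'a mat" where
  "mat_1based N f = mat N N (\<lambda>(i, j). f (Suc i) (Suc j))"

lemma mat_1based_carrier: "mat_1based N f \<in> carrier_mat N N"
  by (simp add: mat_1based_def)

lemma mat_1based_eq_iff:
  "mat_1based N f = mat_1based N g \<longleftrightarrow> (\<forall>i\<in>{1..N}. \<forall>j\<in>{1..N}. f i j = g i j)"
proof
  assume eq: "mat_1based N f = mat_1based N g"
  show "\<forall>i\<in>{1..N}. \<forall>j\<in>{1..N}. f i j = g i j"
  proof (intro ballI)
    fix i j assume ij: "i \<in> {1..N}" "j \<in> {1..N}"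
    have "mat_1based N f $$ (i - 1, j - 1) = mat_1based N g $$ (i - 1, j - 1)" using eq by simp
    moreover have "i - 1 < N" "j - 1 < N" "Suc (i - 1) = i" "Suc (j - 1) = j" using ij by auto
    ultimately show "f i j = g i j" by (simp add: mat_1based_def)
  qed
qed (auto simp: mat_1based_def intro!: eq_matI)

lemma mat_1based_mult:
  fixes f g :: "nat \<Rightarrow> nat \<Rightarrow> 'a::comm_semiring_0"
  shows "mat_1based N f * mat_1based N g = mat_1based N (\<lambda>i j. \<Sum>k\<in>{1..N}. f i k * g k j)"
  by (rule eq_matI) (auto simp: mat_1based_def scalar_prod_def sum.atLeast1_atMost_eq atLeast0LessThan)

lemma transpose_mat_1based: "transpose_mat (mat_1based N f) = mat_1based N (\<lambda>i j. f j i)"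
  by (rule eq_matI) (auto simp: mat_1based_def)

lemma one_mat_eq_mat_1based: "1\<^sub>m N = mat_1based N (\<lambda>i j. if i = j then 1 else 0)"
  by (rule eq_matI) (auto simp: mat_1based_def)

lemma diagonalizes_left_eigen:
  assumes "diagonalizes B" and n: "n \<ge> 2" and m: "m \<in> {1..n-1}" and j: "j \<in> {1..n-1}"
  shows "(\<Sum>i\<in>{1..n-1}. B n m i * alphaA i j) = lam m n * B n m j"
proof -
  let ?N = "n - 1"
  let ?B = "mat_1based ?N (B n)" and ?A = "mat_1based ?N alphaA"
  let ?D = "mat_1based ?N (\<lambda>i j. if i = j then lam i n else 0)"
  have orth: "(\<Sum>k\<in>{1..?N}. B n i k * B n j k) = (if i = j then 1 else 0)"
    if "i \<in> {1..?N}" "j \<in> {1..?N}" for i j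
    using assms(1) n that by (simp add: diagonalizes_def)
  have diag: "(\<Sum>l\<in>{1..?N}. (\<Sum>k\<in>{1..?N}. B n i k * alphaA k l) * B n j l) = (if i = j then lam i n else 0)"
    if "i \<in> {1..?N}" "j \<in> {1..?N}" for i j
  proof -
    have "(\<Sum>l\<in>{1..?N}. (\<Sum>k\<in>{1..?N}. B n i k * alphaA k l) * B n j l) =
        (\<Sum>k\<in>{1..?N}. \<Sum>l\<in>{1..?N}. B n i k * alphaA k l * B n j l)"
      by (simp add: sum_distrib_right) (rule sum.swap)
    thus ?thesis using assms(1) n that by (simp add: diagonalizes_def)
  qed
  have "?B * transpose_mat ?B = 1\<^sub>m ?N"
    unfolding mat_1based_mult transpose_mat_1based one_mat_eq_mat_1based mat_1based_eq_iff
    by (intro ballI orth)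
  moreover have "?B * ?A * transpose_mat ?B = ?D"
    unfolding mat_1based_mult transpose_mat_1based mat_1based_eq_iff by (intro ballI diag)
  ultimately have "?B * ?A = ?D * ?B"
    by (rule orthogonal_diagonalization_left_eigen[OF mat_1based_carrier mat_1based_carrier])
  hence "(\<Sum>i\<in>{1..?N}. B n m i * alphaA i j) = (\<Sum>k\<in>{1..?N}. (if m = k then lam m n else 0) * B n k j)"
    unfolding mat_1based_mult mat_1based_eq_iff using m j by blast
  also have "\<dots> = (\<Sum>k\<in>{1..?N}. if k = m then lam m n * B n m j else 0)"
    by (rule sum.cong) auto
  also have "\<dots> = lam m n * B n m j" using m by simp
  finally show ?thesis .
qed

section \<open>A negative binomial series\<close>

lemma sums_Suc_times_geometric:
  fixes z :: "'a::{real_normed_field, banach}"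
  assumes "norm z < 1"
  shows "(\<lambda>k. of_nat (Suc k) * z ^ k) sums (1 / (1 - z)\<^sup>2)"
proof -
  have s: "summable (\<lambda>k. norm (z ^ k))"
    using assms by (simp add: norm_power summable_geometric)
  have "(\<lambda>k. \<Sum>i\<le>k. z ^ i * z ^ (k - i)) sums ((\<Sum>k. z ^ k) * (\<Sum>k. z ^ k))"
    by (rule Cauchy_product_sums[OF s s])
  moreover have "\<And>k. (\<Sum>i\<le>k. z ^ i * z ^ (k - i)) = of_nat (Suc k) * z ^ k"
    by (simp add: power_add[symmetric])
  moreover have "(\<Sum>k. z ^ k) = 1 / (1 - z)" by (rule suminf_geometric[OF assms])
  ultimately have "(\<lambda>k. of_nat (Suc k) * z ^ k) sums (1 / (1 - z) * (1 / (1 - z)))" by simp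
  thus ?thesis by (simp add: power2_eq_square)
qed

lemma negative_binomial_2_sums:
  fixes z :: "'a::{real_normed_field, banach}"
  assumes "norm z < 1"
  shows "(\<lambda>n. if n \<ge> 2 then of_nat (n - 1) * (1 - z)\<^sup>2 * z ^ (n - 2) else 0) sums 1"
proof -
  let ?f = "\<lambda>n. if n \<ge> 2 then of_nat (n - 1) * (1 - z)\<^sup>2 * z ^ (n - 2) else 0"
  have "1 - z \<noteq> 0" using assms by auto
  hence "(\<lambda>k. (1 - z)\<^sup>2 * (of_nat (Suc k) * z ^ k)) sums 1"
    using sums_mult[OF sums_Suc_times_geometric[OF assms], of "(1 - z)\<^sup>2"] by simp
  hence "(\<lambda>k. ?f (Suc (Suc k))) sums 1" by (simp add: mult_ac)
  hence "(\<lambda>k. ?f (Suc k)) sums 1" using sums_Suc_iff[of "\<lambda>k. ?f (Suc k)"] by simp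
  thus ?thesis using sums_Suc_iff[of ?f] by simp
qed

section \<open>The projections q n\<close>

locale group_ring_projection = group G for G :: "('u, 'z) monoid_scheme" +
  fixes e :: "'u \<Rightarrow> complex"
  assumes projection: "gr_projection G e"
begin

interpretation W: group "wreath G" by (rule wreath_group)

abbreviation wmult where "wmult \<equiv> gr_mult (wreath G)"
abbreviation tpow where "tpow \<equiv> wr_tpow G"
abbreviation q where "q \<equiv> wr_q G e"

definition e_compl :: "'u \<Rightarrow> complex" where
  "e_compl = gr_diff (gr_one G) e"

definition q_factor :: "nat \<Rightarrow> int \<Rightarrow> 'u \<Rightarrow> complex" where
  "q_factor n j = (if j = 1 \<or> j = int n then e_compl else e)"

lemma e_elem: "gr_elem G e" and e_star: "gr_star G e = e" and e_idem: "gr_mult G e e = e"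
  using projection by (auto simp: gr_projection_def)

lemma e_compl_elem: "gr_elem G e_compl" and e_compl_star: "gr_star G e_compl = e_compl"
  and e_compl_idem: "gr_mult G e_compl e_compl = e_compl"
  using gr_projection_compl(1)[OF projection] by (auto simp: gr_projection_def e_compl_def)

lemma e_mult_e_compl: "gr_mult G e e_compl = gr_zero"
  and e_compl_mult_e: "gr_mult G e_compl e = gr_zero"
  unfolding e_compl_def by (rule gr_projection_compl[OF projection])+

lemma q_factor_elem: "gr_elem G (q_factor n j)"
  by (simp add: q_factor_def e_elem e_compl_elem)

lemma wr_e_eq_tensor: "wr_e G e i = wr_tensor G {i} (\<lambda>_. e)"
proof -
  have "wr_e G e i = wr_tensor G ((\<lambda>j. j + i) ` {0}) (\<lambda>j. (\<lambda>_. e) (j - i))"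
    unfolding wr_e_def gr_map_wr_emb by (rule wr_tensor_conj_tpow) (auto simp: e_elem)
  thus ?thesis by simp
qed

lemma wr_f_eq_tensor: "wr_f G e i = wr_tensor G {i} (\<lambda>_. e_compl)"
proof -
  have "gr_one (wreath G) = wr_tensor G {i} (\<lambda>_. gr_one G)"
    unfolding gr_one_eq_wr_tensor[of "\<lambda>_. gr_one G"] by (rule wr_tensor_extend) auto
  thus ?thesis unfolding wr_f_def wr_e_eq_tensor e_compl_def by (simp add: wr_tensor_singleton_diff)
qed

lemma wr_q_eq_tensor:
  assumes n: "n \<ge> 2"
  shows "q n = wr_tensor G {1..int n} (q_factor n)"
proof -
  have ul: "[1..<Suc n] = 1 # [2..<n] @ [n]"
    using n by (simp add: upt_conv_Cons upt_Suc_append numeral_2_eq_2)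
  have "[wr_f G e 1] @ map (\<lambda>i. wr_e G e (int i)) [2..<n] @ [wr_f G e (int n)] =
      map (\<lambda>i. wr_tensor G {i} (\<lambda>_. q_factor n i)) (map int [1..<Suc n])"
    unfolding ul using n by (auto simp: wr_e_eq_tensor wr_f_eq_tensor q_factor_def)
  moreover have "set (map int [1..<Suc n]) = {1..int n}"
    by (simp only: set_map set_upt image_int_atLeastLessThan) auto
  moreover have "gr_prod (wreath G) (map (\<lambda>i. wr_tensor G {i} (\<lambda>_. q_factor n i)) (map int [1..<Suc n]))
      = wr_tensor G (set (map int [1..<Suc n])) (q_factor n)"
    by (rule gr_prod_wr_tensor) (auto simp: distinct_map inj_on_def q_factor_elem)
  ultimately show ?thesis unfolding wr_q_def by simp
qed

lemma q_elem: "n \<ge> 2 \<Longrightarrow> gr_elem (wreath G) (q n)"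
  by (simp add: wr_q_eq_tensor gr_elem_wr_tensor q_factor_elem)

lemma q_star: "n \<ge> 2 \<Longrightarrow> gr_star (wreath G) (q n) = q n"
  by (simp add: wr_q_eq_tensor gr_star_wr_tensor, rule wr_tensor_cong)
    (simp add: q_factor_def e_star e_compl_star)

lemma q_idem: "n \<ge> 2 \<Longrightarrow> wmult (q n) (q n) = q n"
  by (simp add: wr_q_eq_tensor wr_tensor_mult q_factor_elem, rule wr_tensor_cong)
    (simp add: q_factor_def e_idem e_compl_idem)

lemma gr_tr_q:
  assumes n: "n \<ge> 2"
  shows "gr_tr (wreath G) (q n) = (gr_tr G e_compl)\<^sup>2 * (gr_tr G e) ^ (n - 2)"
proof -
  have split: "{1..int n} = {1, int n} \<union> {2..int n - 1}" using n by auto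
  have "gr_tr (wreath G) (q n) = (\<Prod>j\<in>{1..int n}. gr_tr G (q_factor n j))"
    by (simp add: wr_q_eq_tensor n gr_tr_wr_tensor)
  also have "\<dots> = (\<Prod>j\<in>{1, int n}. gr_tr G (q_factor n j)) * (\<Prod>j\<in>{2..int n - 1}. gr_tr G (q_factor n j))"
    unfolding split by (rule prod.union_disjoint) auto
  also have "(\<Prod>j\<in>{1, int n}. gr_tr G (q_factor n j)) = (gr_tr G e_compl)\<^sup>2"
    using n by (simp add: q_factor_def power2_eq_square)
  also have "(\<Prod>j\<in>{2..int n - 1}. gr_tr G (q_factor n j)) = (\<Prod>j\<in>{2..int n - 1}. gr_tr G e)"
    by (rule prod.cong) (auto simp: q_factor_def)
  also have "\<dots> = (gr_tr G e) ^ (n - 2)"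
    using n by (simp add: nat_diff_distrib)
  finally show ?thesis .
qed

lemma wr_e_mult_q:
  assumes n: "n \<ge> 2" and j: "1 \<le> j" "j \<le> int n"
  shows "wmult (wr_e G e j) (q n) = (if 2 \<le> j \<and> j \<le> int n - 1 then q n else gr_zero)"
proof -
  let ?c = "\<lambda>l. if l = j then gr_mult G e (q_factor n l) else q_factor n l"
  have "wmult (wr_e G e j) (q n) = wr_tensor G ({j} \<union> {1..int n})
      (\<lambda>l. gr_mult G (if l \<in> {j} then e else gr_one G) (if l \<in> {1..int n} then q_factor n l else gr_one G))"
    unfolding wr_e_eq_tensor wr_q_eq_tensor[OF n] by (rule wr_tensor_mult_union) (auto simp: e_elem)
  also have "\<dots> = wr_tensor G {1..int n} ?c"
    using j by (simp add: insert_absorb, intro wr_tensor_cong) (auto simp: gr_one_mult q_factor_elem)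
  finally have eq: "wmult (wr_e G e j) (q n) = wr_tensor G {1..int n} ?c" .
  show ?thesis
  proof (cases "2 \<le> j \<and> j \<le> int n - 1")
    case True
    hence "wr_tensor G {1..int n} ?c = q n"
      by (simp add: wr_q_eq_tensor[OF n], intro wr_tensor_cong) (auto simp: q_factor_def e_idem)
    thus ?thesis using True eq by simp
  next
    case False
    hence "gr_mult G e (q_factor n j) = gr_zero" using j by (auto simp: q_factor_def e_mult_e_compl)
    hence "wr_tensor G {1..int n} ?c = gr_zero" using j by (intro wr_tensor_eq_zero[of _ j]) auto
    thus ?thesis by (simp only: if_not_P[OF False] eq)
  qed
qed

lemma q_factor_shift_mult_vanishes:
  assumes n: "n \<ge> 2" and n': "n' \<ge> 2" and k: "2 - int n \<le> k" "k \<le> int n' - 2"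
    and ne: "\<not> (k = 0 \<and> n = n')"
  obtains l where "l \<in> (\<lambda>j. j + k) ` {1..int n}" "l \<in> {1..int n'}"
    "gr_mult G (q_factor n (l - k)) (q_factor n' l) = gr_zero"
proof -
  consider "k < 0" | "k > 0" | "k = 0" "n < n'" | "k = 0" "n' < n"
    using ne by linarith
  thus thesis
  proof cases
    case 1
    thus thesis using k n' by (intro that[of 1]) (auto simp: image_iff q_factor_def e_mult_e_compl)
  next
    case 2
    thus thesis using k n by (intro that[of "1 + k"]) (auto simp: q_factor_def e_compl_mult_e)
  next
    case 3
    thus thesis using n by (intro that[of "int n"]) (auto simp: q_factor_def e_compl_mult_e)
  next
    case 4
    thus thesis using n' by (intro that[of "int n'"]) (auto simp: q_factor_def e_mult_e_compl)
  qed
qed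

lemma q_tpow_q:
  assumes n: "n \<ge> 2" and n': "n' \<ge> 2" and k: "2 - int n \<le> k" "k \<le> int n' - 2"
  shows "wmult (wmult (q n) (tpow k)) (q n') = (if k = 0 \<and> n = n' then q n else gr_zero)"
proof (cases "k = 0 \<and> n = n'")
  case True
  thus ?thesis using W.gr_mult_one[OF q_elem[OF n]] q_idem[OF n] by (simp add: wr_tpow_zero)
next
  case False
  let ?J = "(\<lambda>j. j + k) ` {1..int n}"
  let ?X = "wr_tensor G ?J (\<lambda>j. q_factor n (j - k))"
  have X: "gr_elem (wreath G) ?X" by (rule gr_elem_wr_tensor) (auto simp: q_factor_elem)
  have "wmult (q n) (tpow k) = wmult (tpow k) (wmult (wmult (tpow (- k)) (q n)) (tpow k))"
    by (simp add: W.gr_mult_assoc gr_elem_wr_tpow q_elem n W.gr_elem_mult wr_tpow_cancel)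
  also have "wmult (wmult (tpow (- k)) (q n)) (tpow k) = ?X"
    unfolding wr_q_eq_tensor[OF n] by (rule wr_tensor_conj_tpow) (auto simp: q_factor_elem)
  finally have "wmult (wmult (q n) (tpow k)) (q n') = wmult (tpow k) (wmult ?X (q n'))"
    by (simp only:) (rule W.gr_mult_assoc[OF gr_elem_wr_tpow X q_elem[OF n']])
  also have "wmult ?X (q n') = wr_tensor G (?J \<union> {1..int n'}) (\<lambda>l. gr_mult G
      (if l \<in> ?J then q_factor n (l - k) else gr_one G) (if l \<in> {1..int n'} then q_factor n' l else gr_one G))"
    unfolding wr_q_eq_tensor[OF n'] by (rule wr_tensor_mult_union) (auto simp: q_factor_elem)
  also have "\<dots> = gr_zero"
  proof -
    obtain l where "l \<in> ?J" "l \<in> {1..int n'}" "gr_mult G (q_factor n (l - k)) (q_factor n' l) = gr_zero"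
      using q_factor_shift_mult_vanishes[OF n n' k False] by blast
    thus ?thesis by (intro wr_tensor_eq_zero[of _ l]) auto
  qed
  finally show ?thesis unfolding if_not_P[OF False] W.gr_mult_zero .
qed

end

section \<open>The projections p m n\<close>

context group_ring_projection
begin

interpretation W: group "wreath G" by (rule wreath_group)

definition tq :: "nat \<Rightarrow> nat \<Rightarrow> ((int \<Rightarrow> 'u) \<times> int \<Rightarrow> complex)" where
  "tq n i = wmult (tpow (int i)) (q n)"

lemma wr_r_eq_sum: "wr_r G e B m n = (\<lambda>x. \<Sum>i\<in>{1..n-1}. complex_of_real (B n m i) * tq n i x)"
  by (simp add: wr_r_def tq_def)

lemma tq_elem: "n \<ge> 2 \<Longrightarrow> gr_elem (wreath G) (tq n i)"
  unfolding tq_def by (intro W.gr_elem_mult gr_elem_wr_tpow q_elem)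

lemma wr_r_elem: "n \<ge> 2 \<Longrightarrow> gr_elem (wreath G) (wr_r G e B m n)"
  unfolding wr_r_eq_sum by (intro W.gr_elem_sum tq_elem) auto

lemma q_tpow_elem: "n \<ge> 2 \<Longrightarrow> gr_elem (wreath G) (wmult (q n) (tpow i))"
  by (intro W.gr_elem_mult gr_elem_wr_tpow q_elem)

lemma gr_star_tq: "n \<ge> 2 \<Longrightarrow> gr_star (wreath G) (tq n i) = wmult (q n) (tpow (- int i))"
  unfolding tq_def by (simp add: W.gr_star_mult gr_elem_wr_tpow q_elem q_star gr_star_wr_tpow)

lemma gr_star_wr_r: "gr_star (wreath G) (wr_r G e B m n) =
    (\<lambda>x. \<Sum>i\<in>{1..n-1}. complex_of_real (B n m i) * gr_star (wreath G) (tq n i) x)"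
  unfolding wr_r_eq_sum W.gr_star_sum by simp

lemma gr_star_tq_mult_tq:
  assumes n: "n \<ge> 2" and n': "n' \<ge> 2" and i: "i \<in> {1..n-1}" and j: "j \<in> {1..n'-1}"
  shows "wmult (gr_star (wreath G) (tq n i)) (tq n' j) = (if i = j \<and> n = n' then q n else gr_zero)"
proof -
  have "wmult (gr_star (wreath G) (tq n i)) (tq n' j) =
      wmult (wmult (wmult (q n) (tpow (- int i))) (tpow (int j))) (q n')"
    unfolding gr_star_tq[OF n] unfolding tq_def
    by (rule W.gr_mult_assoc[symmetric, OF q_tpow_elem[OF n] gr_elem_wr_tpow q_elem[OF n']])
  also have "wmult (wmult (q n) (tpow (- int i))) (tpow (int j)) = wmult (q n) (tpow (int j - int i))"
    by (simp add: W.gr_mult_assoc q_elem n gr_elem_wr_tpow wr_tpow_mult)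
  also have "wmult (wmult (q n) (tpow (int j - int i))) (q n') =
      (if int j - int i = 0 \<and> n = n' then q n else gr_zero)"
    by (rule q_tpow_q) (use n n' i j in auto)
  finally show ?thesis by simp
qed

lemma gr_star_wr_r_mult_wr_r:
  assumes B: "diagonalizes B" and n: "n \<ge> 2" and n': "n' \<ge> 2"
    and m: "m \<in> {1..n-1}" and m': "m' \<in> {1..n'-1}"
  shows "wmult (gr_star (wreath G) (wr_r G e B m n)) (wr_r G e B m' n') =
    (if (m, n) = (m', n') then q n else gr_zero)"
proof -
  let ?c = "\<lambda>i. complex_of_real (B n m i)" and ?c' = "\<lambda>j. complex_of_real (B n' m' j)"
  have "wmult (gr_star (wreath G) (wr_r G e B m n)) (wr_r G e B m' n') =
      (\<lambda>x. \<Sum>i\<in>{1..n-1}. ?c i * wmult (gr_star (wreath G) (tq n i)) (wr_r G e B m' n') x)"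
    unfolding gr_star_wr_r by (rule W.gr_mult_sum_left) (auto intro: W.gr_elem_star tq_elem n)
  also have "\<dots> = (\<lambda>x. \<Sum>i\<in>{1..n-1}. ?c i * (\<Sum>j\<in>{1..n'-1}. ?c' j *
      wmult (gr_star (wreath G) (tq n i)) (tq n' j) x))"
    unfolding wr_r_eq_sum by (subst W.gr_mult_sum_right) (auto intro: W.gr_elem_star tq_elem n)
  also have "\<dots> = (\<lambda>x. \<Sum>i\<in>{1..n-1}. if n = n' then ?c i * ?c' i * q n x else 0)"
  proof (intro ext sum.cong refl)
    fix x i assume i: "i \<in> {1..n-1}"
    have "(\<Sum>j\<in>{1..n'-1}. ?c' j * wmult (gr_star (wreath G) (tq n i)) (tq n' j) x) =
        (\<Sum>j\<in>{1..n'-1}. if j = i then (if n = n' then ?c' i * q n x else 0) else 0)"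
      using i by (intro sum.cong refl) (auto simp: gr_star_tq_mult_tq n n' gr_zero_def)
    also have "\<dots> = (if n = n' then ?c' i * q n x else 0)" using i by auto
    finally show "?c i * (\<Sum>j\<in>{1..n'-1}. ?c' j * wmult (gr_star (wreath G) (tq n i)) (tq n' j) x) =
        (if n = n' then ?c i * ?c' i * q n x else 0)" by simp
  qed
  also have "\<dots> = (if n = n' then (\<lambda>x. complex_of_real (\<Sum>i\<in>{1..n-1}. B n m i * B n m' i) * q n x)
      else gr_zero)"
    by (auto simp: gr_zero_def fun_eq_iff sum_distrib_right mult.assoc)
  also have "\<dots> = (if (m, n) = (m', n') then q n else gr_zero)"
  proof (cases "n = n'")
    case True
    have "(\<Sum>i\<in>{1..n-1}. B n m i * B n m' i) = (if m = m' then 1 else 0)"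
      using B n m m' True by (simp add: diagonalizes_def)
    thus ?thesis using True by (auto simp: gr_zero_def)
  qed simp
  finally show ?thesis .
qed

lemma tq_mult_q: "n \<ge> 2 \<Longrightarrow> wmult (tq n i) (q n) = tq n i"
  unfolding tq_def by (simp add: W.gr_mult_assoc gr_elem_wr_tpow q_elem q_idem)

lemma wr_r_mult_q: "n \<ge> 2 \<Longrightarrow> wmult (wr_r G e B m n) (q n) = wr_r G e B m n"
  unfolding wr_r_eq_sum by (simp add: W.gr_mult_sum_left tq_elem tq_mult_q)

lemma q_mult_gr_star_wr_r:
  assumes n: "n \<ge> 2"
  shows "wmult (q n) (gr_star (wreath G) (wr_r G e B m n)) = gr_star (wreath G) (wr_r G e B m n)"
  using W.gr_star_mult[OF wr_r_elem[OF n] q_elem[OF n]] by (simp add: q_star n wr_r_mult_q)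

lemma wr_p_elem: "n \<ge> 2 \<Longrightarrow> gr_elem (wreath G) (wr_p G e B m n)"
  unfolding wr_p_def by (intro W.gr_elem_mult W.gr_elem_star wr_r_elem)

lemma wr_p_projection:
  assumes B: "diagonalizes B" and n: "n \<ge> 2" and m: "m \<in> {1..n-1}"
  shows "gr_projection (wreath G) (wr_p G e B m n)"
proof -
  let ?r = "wr_r G e B m n" and ?s = "gr_star (wreath G) (wr_r G e B m n)"
  have r: "gr_elem (wreath G) ?r" "gr_elem (wreath G) ?s" using wr_r_elem[OF n] W.gr_elem_star by auto
  have "wmult (wmult ?r ?s) (wmult ?r ?s) = wmult ?r (wmult (wmult ?s ?r) ?s)"
    using r by (simp add: W.gr_mult_assoc W.gr_elem_mult)
  also have "\<dots> = wmult ?r ?s"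
    using gr_star_wr_r_mult_wr_r[OF B n n m m] by (simp add: q_mult_gr_star_wr_r n)
  finally show ?thesis
    using wr_p_elem[OF n] r by (simp add: gr_projection_def wr_p_def W.gr_star_mult W.gr_star_star)
qed

lemma wr_p_orthogonal:
  assumes B: "diagonalizes B" and n: "n \<ge> 2" and m: "m \<in> {1..n-1}"
    and n': "n' \<ge> 2" and m': "m' \<in> {1..n'-1}" and ne: "(m, n) \<noteq> (m', n')"
  shows "wmult (wr_p G e B m n) (wr_p G e B m' n') = gr_zero"
proof -
  let ?r = "wr_r G e B m n" and ?s = "gr_star (wreath G) (wr_r G e B m n)"
  let ?r' = "wr_r G e B m' n'" and ?s' = "gr_star (wreath G) (wr_r G e B m' n')"
  have r: "gr_elem (wreath G) ?r" "gr_elem (wreath G) ?s" "gr_elem (wreath G) ?r'" "gr_elem (wreath G) ?s'"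
    using wr_r_elem[OF n] wr_r_elem[OF n'] W.gr_elem_star by auto
  have "wmult (wmult ?r ?s) (wmult ?r' ?s') = wmult ?r (wmult (wmult ?s ?r') ?s')"
    using r by (simp add: W.gr_mult_assoc W.gr_elem_mult)
  also have "wmult ?s ?r' = gr_zero" by (rule gr_star_wr_r_mult_wr_r[OF B n n' m m', unfolded if_not_P[OF ne]])
  finally show ?thesis unfolding wr_p_def by (simp add: W.gr_zero_mult W.gr_mult_zero)
qed

lemma gr_tr_wr_p:
  assumes B: "diagonalizes B" and n: "n \<ge> 2" and m: "m \<in> {1..n-1}"
  shows "gr_tr (wreath G) (wr_p G e B m n) = gr_tr (wreath G) (q n)"
  unfolding wr_p_def W.gr_tr_mult_commute[OF wr_r_elem[OF n] W.gr_elem_star[OF wr_r_elem[OF n]]]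
  using gr_star_wr_r_mult_wr_r[OF B n n m m] by simp

section \<open>The action of T\<close>

abbreviation E where "E \<equiv> gr_map G (wreath G) (wr_emb G) e"

lemma E_elem: "gr_elem (wreath G) E"
  unfolding gr_map_wr_emb by (rule gr_elem_wr_tensor) (auto simp: e_elem)

lemma E_mult_tpow:
  assumes Y: "gr_elem (wreath G) Y"
  shows "wmult E (wmult (tpow j) Y) = wmult (tpow j) (wmult (wr_e G e j) Y)"
proof -
  have "wmult (tpow j) (wmult (wr_e G e j) Y) = wmult (tpow j) (wmult (tpow (- j)) (wmult E (wmult (tpow j) Y)))"
    unfolding wr_e_def
    by (simp add: W.gr_mult_assoc gr_elem_wr_tpow E_elem W.gr_elem_mult Y)
  also have "\<dots> = wmult E (wmult (tpow j) Y)"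
    by (rule wr_tpow_cancel) (intro W.gr_elem_mult gr_elem_wr_tpow E_elem Y)
  finally show ?thesis by simp
qed

lemma tpow_mult_tq: "n \<ge> 2 \<Longrightarrow> wmult (tpow j) (tq n i) = wmult (tpow (j + int i)) (q n)"
  unfolding tq_def by (simp add: W.gr_mult_assoc[symmetric] gr_elem_wr_tpow q_elem wr_tpow_mult)

lemma E_tpow_mult_tq:
  assumes n: "n \<ge> 2" and i: "i \<in> {1..n-1}"
  shows "wmult (wmult E (tpow 1)) (tq n i) = (if i + 1 \<le> n - 1 then tq n (i + 1) else gr_zero)"
proof -
  have "wmult (wmult E (tpow 1)) (tq n i) = wmult E (wmult (tpow (1 + int i)) (q n))"
    by (simp add: W.gr_mult_assoc E_elem gr_elem_wr_tpow tq_elem n tpow_mult_tq)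
  also have "\<dots> = wmult (tpow (1 + int i)) (wmult (wr_e G e (1 + int i)) (q n))"
    by (rule E_mult_tpow[OF q_elem[OF n]])
  also have "wmult (wr_e G e (1 + int i)) (q n) = (if 1 + int i \<le> int n - 1 then q n else gr_zero)"
    by (subst wr_e_mult_q[OF n]) (use i in auto)
  finally show ?thesis using i n by (auto simp: tq_def W.gr_mult_zero add.commute)
qed

lemma tpow_E_mult_tq:
  assumes n: "n \<ge> 2" and i: "i \<in> {1..n-1}"
  shows "wmult (wmult (tpow (-1)) E) (tq n i) = (if 2 \<le> i then tq n (i - 1) else gr_zero)"
proof -
  have "wmult (wmult (tpow (-1)) E) (tq n i) = wmult (tpow (-1)) (wmult E (wmult (tpow (int i)) (q n)))"
    unfolding tq_def by (rule W.gr_mult_assoc[OF gr_elem_wr_tpow E_elem tq_elem[OF n, unfolded tq_def]])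
  also have "wmult E (wmult (tpow (int i)) (q n)) = wmult (tpow (int i)) (wmult (wr_e G e (int i)) (q n))"
    by (rule E_mult_tpow[OF q_elem[OF n]])
  also have "wmult (wr_e G e (int i)) (q n) = (if 2 \<le> int i then q n else gr_zero)"
    by (subst wr_e_mult_q[OF n]) (use i in auto)
  finally show ?thesis
    using i n by (auto simp: tq_def W.gr_mult_zero W.gr_mult_assoc[symmetric] gr_elem_wr_tpow q_elem
        wr_tpow_mult of_nat_diff)
qed

lemma alphaA_sum:
  assumes i: "i \<in> {1..n-1}"
  shows "(\<Sum>j\<in>{1..n-1}. complex_of_real (alphaA i j) * z j) =
    (if i + 1 \<le> n - 1 then z (i + 1) else 0) + (if 2 \<le> i then z (i - 1) else 0)"
proof -
  have "(\<Sum>j\<in>{1..n-1}. complex_of_real (alphaA i j) * z j) =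
      (\<Sum>j\<in>{1..n-1}. if j = i + 1 then z j else 0) + (\<Sum>j\<in>{1..n-1}. if j = i - 1 then z j else 0)"
    unfolding sum.distrib[symmetric] using i by (intro sum.cong refl) (auto simp: alphaA_def)
  also have "(\<Sum>j\<in>{1..n-1}. if j = i + 1 then z j else 0) = (if i + 1 \<le> n - 1 then z (i + 1) else 0)"
    by (subst sum.delta) auto
  also have "(\<Sum>j\<in>{1..n-1}. if j = i - 1 then z j else 0) = (if 2 \<le> i then z (i - 1) else 0)"
    by (subst sum.delta) (use i in auto)
  finally show ?thesis .
qed

lemma wr_T_elem: "gr_elem (wreath G) (wr_T G e)"
  unfolding wr_T_def by (intro W.gr_elem_add W.gr_elem_mult E_elem gr_elem_wr_tpow)

lemma wr_T_mult_wr_r: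
  assumes B: "diagonalizes B" and n: "n \<ge> 2" and m: "m \<in> {1..n-1}"
  shows "wmult (wr_T G e) (wr_r G e B m n) = gr_scale (complex_of_real (lam m n)) (wr_r G e B m n)"
proof
  fix x
  let ?I = "{1..n-1}" and ?c = "\<lambda>i. complex_of_real (B n m i)"
  have "wmult (wr_T G e) (wr_r G e B m n) x = (\<Sum>i\<in>?I. ?c i *
      (wmult (wmult E (tpow 1)) (tq n i) x + wmult (wmult (tpow (-1)) E) (tq n i) x))"
    unfolding wr_T_def W.gr_mult_add_left[OF W.gr_elem_mult W.gr_elem_mult,
        OF E_elem gr_elem_wr_tpow gr_elem_wr_tpow E_elem] wr_r_eq_sum
    by (simp add: W.gr_mult_sum_right W.gr_elem_mult E_elem gr_elem_wr_tpow gr_add_def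
        sum.distrib distrib_left)
  also have "\<dots> = (\<Sum>i\<in>?I. ?c i * (\<Sum>j\<in>?I. complex_of_real (alphaA i j) * tq n j x))"
  proof (intro sum.cong refl arg_cong2[where f = "(*)"])
    fix i assume i: "i \<in> ?I"
    show "wmult (wmult E (tpow 1)) (tq n i) x + wmult (wmult (tpow (-1)) E) (tq n i) x =
        (\<Sum>j\<in>?I. complex_of_real (alphaA i j) * tq n j x)"
      unfolding alphaA_sum[OF i] E_tpow_mult_tq[OF n i] tpow_E_mult_tq[OF n i]
      by (simp add: gr_zero_def)
  qed
  also have "\<dots> = (\<Sum>j\<in>?I. complex_of_real (\<Sum>i\<in>?I. B n m i * alphaA i j) * tq n j x)"
    by (simp add: sum_distrib_left sum_distrib_right mult.assoc) (rule sum.swap)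
  also have "\<dots> = (\<Sum>j\<in>?I. complex_of_real (lam m n) * (?c j * tq n j x))"
  proof (intro sum.cong refl)
    fix j assume j: "j \<in> ?I"
    show "complex_of_real (\<Sum>i\<in>?I. B n m i * alphaA i j) * tq n j x =
        complex_of_real (lam m n) * (?c j * tq n j x)"
      unfolding diagonalizes_left_eigen[OF B n m j] by simp
  qed
  also have "\<dots> = gr_scale (complex_of_real (lam m n)) (wr_r G e B m n) x"
    by (simp add: gr_scale_def wr_r_eq_sum sum_distrib_left)
  finally show "wmult (wr_T G e) (wr_r G e B m n) x = gr_scale (complex_of_real (lam m n)) (wr_r G e B m n) x" .
qed

lemma wr_T_mult_wr_p:
  assumes B: "diagonalizes B" and n: "n \<ge> 2" and m: "m \<in> {1..n-1}"
  shows "wmult (wr_T G e) (wr_p G e B m n) = gr_scale (complex_of_real (lam m n)) (wr_p G e B m n)"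
  unfolding wr_p_def
  by (simp add: W.gr_mult_assoc[symmetric] wr_T_elem wr_r_elem n W.gr_elem_star wr_T_mult_wr_r[OF B n m]
      W.gr_mult_scale_left)

lemma sum_gr_tr_wr_p:
  assumes B: "diagonalizes B"
  shows "(\<Sum>m\<in>{1..n-1}. gr_tr (wreath G) (wr_p G e B m n)) =
    (if n \<ge> 2 then of_nat (n - 1) * (1 - gr_tr G e)\<^sup>2 * (gr_tr G e) ^ (n - 2) else 0)"
proof (cases "n \<ge> 2")
  case True
  have "gr_tr G e_compl = 1 - gr_tr G e"
    by (simp add: e_compl_def gr_tr_def gr_diff_def gr_one_def gr_of_def)
  thus ?thesis using True by (simp add: gr_tr_wr_p[OF B True] gr_tr_q)
qed simp

end

theorem lemma3p3:
  fixes U :: "('u, 'z) monoid_scheme"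
    and e :: "'u \<Rightarrow> complex"
    and B :: "nat \<Rightarrow> nat \<Rightarrow> nat \<Rightarrow> real"
  assumes grp: "group U"
    and torsion: "\<exists>u\<in>carrier U. u \<noteq> \<one>\<^bsub>U\<^esub> \<and> (\<exists>k::nat. k > 0 \<and> u [^]\<^bsub>U\<^esub> k = \<one>\<^bsub>U\<^esub>)"
    and proj: "gr_projection U e"
    and nz: "e \<noteq> gr_zero" and n1: "e \<noteq> gr_one U"
    and B: "diagonalizes B"
  shows "(\<forall>n\<ge>2. \<forall>m\<in>{1..n-1}. gr_projection (wreath U) (wr_p U e B m n))
    \<and> (\<forall>n\<ge>2. \<forall>m\<in>{1..n-1}. \<forall>n'\<ge>2. \<forall>m'\<in>{1..n'-1}. (m, n) \<noteq> (m', n') \<longrightarrow>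
          gr_mult (wreath U) (wr_p U e B m n) (wr_p U e B m' n') = gr_zero)
    \<and> (\<lambda>n. \<Sum>m\<in>{1..n-1}. gr_tr (wreath U) (wr_p U e B m n)) sums 1
    \<and> (\<forall>n\<ge>2. \<forall>m\<in>{1..n-1}. gr_mult (wreath U) (wr_T U e) (wr_p U e B m n)
          = gr_scale (complex_of_real (lam m n)) (wr_p U e B m n))"
proof -
  interpret group_ring_projection U e
    by (intro group_ring_projection.intro grp group_ring_projection_axioms.intro proj)
  have "(\<lambda>n. \<Sum>m\<in>{1..n-1}. gr_tr (wreath U) (wr_p U e B m n)) sums 1"
    unfolding sum_gr_tr_wr_p[OF B]
    by (rule negative_binomial_2_sums[OF group.gr_tr_projection_lt_1[OF grp proj n1]])
  thus ?thesis using wr_p_projection[OF B] wr_p_orthogonal[OF B] wr_T_mult_wr_p[OF B] by blast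
qed

end
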